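(* Let $\Gamma$ be a competitive population network game, $\beta>0$, $\lambda\ge0$. Then the belief dynamics of homogeneous systems, $$\frac{d\mu_{is}}{dt}=\frac{f_{i,s}(\{\boldsymbol{\mu}_j\}_{j\in V_i})-\mu_{is}}{\lambda+t+1},\qquad i\in V,\ s\in S_i,\ t\ge0,$$ on $\prod_{i\in V}\Delta_i$ converges to a unique QRE $\mathbf{x}^\ast$ of $\Gamma$: $\Gamma$ has exactly one QRE, every solution with $\boldsymbol{\mu}(0)\in\prod_{i\in V}\Delta_i$ satisfies $\boldsymbol{\mu}(t)\to\mathbf{x}^\ast$ as $t\to\infty$, and $\mathbf{x}^\ast$ is globally asymptotically stable.
   Context: A population network game $\Gamma$ consists of a finite undirected graph with vertex set $V=\{1,\dots,n\}$ (populations) and edge set $E$; $V_i=\{j:\{i,j\}\in E\}$. Population $i$ has finite strategy set $S_i$, $\Delta_i\subset\mathbb{R}^{|S_i|}$ is the probability simplex, and each edge $\{i,j\}$ carries payoff matrices $\mathbf{A}_{ij}\in\mathbb{R}^{|S_i|\times|S_j|}$, $\mathbf{A}_{ji}\in\mathbb{R}^{|S_j|\times|S_i|}$. For $\mathbf{x}=(\mathbf{x}_i)_{i\in V}\in\prod_i\Delta_i$, $r_i(\mathbf{x})=\sum_{j\in V_i}\mathbf{x}_i^\top\mathbf{A}_{ij}\mathbf{x}_j$. $\Gamma$ is competitive (weighted zero-sum) if there are constants $\omega_i>0$ with $\sum_{i\in V}\omega_i r_i(\mathbf{x})=0$ for all $\mathbf{x}\in\prod_{i\in V}\Delta_i$.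 The logit choice function is $f_{i,s}(\{\boldsymbol{\mu}_j\}_{j\in V_i})=\exp\big(\beta\sum_{j\in V_i}\mathbf{e}_s^\top\mathbf{A}_{ij}\boldsymbol{\mu}_j\big)/\sum_{s'\in S_i}\exp\big(\beta\sum_{j\in V_i}\mathbf{e}_{s'}^\top\mathbf{A}_{ij}\boldsymbol{\mu}_j\big)$, $\mathbf{e}_s$ the $s$-th unit vector. A QRE is $\mathbf{x}^\ast\in\prod_i\Delta_i$ with $x^\ast_{is}=f_{i,s}(\{\mathbf{x}^\ast_j\}_{j\in V_i})$ for all $i,s$. *)

theory Defs
  imports "HOL-Analysis.Analysis"
begin

text \<open>Populations are 0,...,n-1; population i has strategies 0,...,m i - 1.
  The graph is a symmetric irreflexive relation E; A i j s s' is the (s,s') entry of A_ij.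
  A state x assigns x i s to population i and strategy s.\<close>

definition network_graph :: "(nat \<Rightarrow> nat \<Rightarrow> bool) \<Rightarrow> bool" where
  "network_graph E \<longleftrightarrow> (\<forall>i j. E i j \<longrightarrow> E j i) \<and> (\<forall>i. \<not> E i i)"

definition neighbors :: "nat \<Rightarrow> (nat \<Rightarrow> nat \<Rightarrow> bool) \<Rightarrow> nat \<Rightarrow> nat set" where
  "neighbors n E i = {j. j < n \<and> E i j}"

text \<open>Product of simplices; coordinates outside the index ranges are fixed to 0.\<close>
definition simplex_prod :: "nat \<Rightarrow> (nat \<Rightarrow> nat) \<Rightarrow> (nat \<Rightarrow> nat \<Rightarrow> real) set" where
  "simplex_prod n m = {x. (\<forall>i<n. (\<forall>s<m i. 0 \<le> x i s) \<and> (\<Sum>s<m i. x i s) = 1)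
                          \<and> (\<forall>i s. (n \<le> i \<or> m i \<le> s) \<longrightarrow> x i s = 0)}"

definition payoff :: "nat \<Rightarrow> (nat \<Rightarrow> nat) \<Rightarrow> (nat \<Rightarrow> nat \<Rightarrow> bool)
    \<Rightarrow> (nat \<Rightarrow> nat \<Rightarrow> nat \<Rightarrow> nat \<Rightarrow> real) \<Rightarrow> nat \<Rightarrow> (nat \<Rightarrow> nat \<Rightarrow> real) \<Rightarrow> real" where
  "payoff n m E A i x =
     (\<Sum>j\<in>neighbors n E i. \<Sum>s<m i. \<Sum>s'<m j. x i s * A i j s s' * x j s')"

definition competitive :: "nat \<Rightarrow> (nat \<Rightarrow> nat) \<Rightarrow> (nat \<Rightarrow> nat \<Rightarrow> bool)
    \<Rightarrow> (nat \<Rightarrow> nat \<Rightarrow> nat \<Rightarrow> nat \<Rightarrow> real) \<Rightarrow> bool" where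
  "competitive n m E A \<longleftrightarrow> (\<exists>\<omega> :: nat \<Rightarrow> real. (\<forall>i<n. 0 < \<omega> i) \<and>
      (\<forall>x\<in>simplex_prod n m. (\<Sum>i<n. \<omega> i * payoff n m E A i x) = 0))"

definition util :: "nat \<Rightarrow> (nat \<Rightarrow> nat) \<Rightarrow> (nat \<Rightarrow> nat \<Rightarrow> bool)
    \<Rightarrow> (nat \<Rightarrow> nat \<Rightarrow> nat \<Rightarrow> nat \<Rightarrow> real) \<Rightarrow> nat \<Rightarrow> nat \<Rightarrow> (nat \<Rightarrow> nat \<Rightarrow> real) \<Rightarrow> real" where
  "util n m E A i s \<mu> = (\<Sum>j\<in>neighbors n E i. \<Sum>s'<m j. A i j s s' * \<mu> j s')"

definition logit :: "nat \<Rightarrow> (nat \<Rightarrow> nat) \<Rightarrow> (nat \<Rightarrow> nat \<Rightarrow> bool)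
    \<Rightarrow> (nat \<Rightarrow> nat \<Rightarrow> nat \<Rightarrow> nat \<Rightarrow> real) \<Rightarrow> real \<Rightarrow> nat \<Rightarrow> nat \<Rightarrow> (nat \<Rightarrow> nat \<Rightarrow> real) \<Rightarrow> real" where
  "logit n m E A \<beta> i s \<mu> =
     exp (\<beta> * util n m E A i s \<mu>) / (\<Sum>s'<m i. exp (\<beta> * util n m E A i s' \<mu>))"

definition is_QRE :: "nat \<Rightarrow> (nat \<Rightarrow> nat) \<Rightarrow> (nat \<Rightarrow> nat \<Rightarrow> bool)
    \<Rightarrow> (nat \<Rightarrow> nat \<Rightarrow> nat \<Rightarrow> nat \<Rightarrow> real) \<Rightarrow> real \<Rightarrow> (nat \<Rightarrow> nat \<Rightarrow> real) \<Rightarrow> bool" where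
  "is_QRE n m E A \<beta> x \<longleftrightarrow> x \<in> simplex_prod n m \<and>
     (\<forall>i<n. \<forall>s<m i. x i s = logit n m E A \<beta> i s x)"

definition belief_solution :: "nat \<Rightarrow> (nat \<Rightarrow> nat) \<Rightarrow> (nat \<Rightarrow> nat \<Rightarrow> bool)
    \<Rightarrow> (nat \<Rightarrow> nat \<Rightarrow> nat \<Rightarrow> nat \<Rightarrow> real) \<Rightarrow> real \<Rightarrow> real \<Rightarrow> (real \<Rightarrow> nat \<Rightarrow> nat \<Rightarrow> real) \<Rightarrow> bool" where
  "belief_solution n m E A \<beta> lam \<mu> \<longleftrightarrow>
     (\<forall>t\<ge>0. \<forall>i<n. \<forall>s<m i.
        ((\<lambda>\<tau>. \<mu> \<tau> i s) has_real_derivative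
           (logit n m E A \<beta> i s (\<mu> t) - \<mu> t i s) / (lam + t + 1)) (at t within {0..}))"

definition state_dist :: "nat \<Rightarrow> (nat \<Rightarrow> nat) \<Rightarrow> (nat \<Rightarrow> nat \<Rightarrow> real) \<Rightarrow> (nat \<Rightarrow> nat \<Rightarrow> real) \<Rightarrow> real" where
  "state_dist n m x y = (\<Sum>i<n. \<Sum>s<m i. \<bar>x i s - y i s\<bar>)"

end

theory Submission
  imports Defs
begin

text \<open>Let \<open>\<omega>\<close> be the weights of the zero-sum identity and \<open>\<parallel>-\<parallel>\<close> the \<open>\<omega>\<close>-weighted
  Euclidean norm. The function
  \<open>V(x) = \<Sum>\<^sub>i \<omega>\<^sub>i (\<Sum>\<^sub>s x\<^sub>i\<^sub>s ln x\<^sub>i\<^sub>s + ln \<Sum>\<^sub>s exp (\<beta> u\<^sub>i\<^sub>s(x)))\<close>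
  is the weighted sum of the Kullback--Leibler divergences of \<open>x\<^sub>i\<close> from the logit response
  \<open>f\<^sub>i(x)\<close>, because the payoff terms add up to \<open>\<Sum>\<^sub>i \<omega>\<^sub>i r\<^sub>i(x) = 0\<close>; for the same reason
  its derivative in the direction \<open>f(x) - x\<close> is
  \<open>-\<Sum>\<^sub>i \<omega>\<^sub>i \<Sum>\<^sub>s (f\<^sub>i\<^sub>s - x\<^sub>i\<^sub>s)(ln f\<^sub>i\<^sub>s - ln x\<^sub>i\<^sub>s) \<le> -\<parallel>x - f(x)\<parallel>\<^sup>2\<close>.
  Logit probabilities are bounded below by some \<open>\<delta> > 0\<close>, so a minimiser of \<open>V\<close> over the
  compact set of states bounded below by \<open>\<delta>\<close> is a QRE. For a QRE \<open>x\<^sup>*\<close>, antisymmetry of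
  the weighted payoff form gives \<open>\<parallel>x - x\<^sup>*\<parallel>\<^sup>2 \<le> \<parallel>x - f(x)\<parallel>\<^sup>2 / \<rho>\<^sup>2 \<le> 4 V(x) / \<rho>\<^sup>2\<close>
  whenever \<open>x\<close> and \<open>f(x)\<close> are bounded below by \<open>\<rho>\<close>; hence uniqueness. The belief dynamics
  keeps states bounded below, \<open>V\<close> is nonincreasing along it, and \<open>\<delta> V \<le> \<parallel>x - f(x)\<parallel>\<^sup>2\<close> makes
  it decay like \<open>(\<lambda> + t + 1) powr -\<delta>\<close>: this gives convergence, and monotonicity gives
  stability.\<close>

section \<open>Elementary inequalities\<close>

lemma entropy_term_ge_sq_diff:
  fixes x q :: real
  assumes "0 \<le> x" "x \<le> 1" "0 < q" "q \<le> 1"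
  shows "(x - q)^2 / 4 \<le> x * (ln x - ln q) + q - x"
proof (cases "x = 0")
  case True
  thus ?thesis using assms by (simp add: power2_eq_square mult_le_cancel_left1)
next
  case False
  \<comment> \<open>With \<open>x = a\<^sup>2\<close> and \<open>q = b\<^sup>2\<close> the right-hand side is at least \<open>(a - b)\<^sup>2\<close>,
    while \<open>(x - q)\<^sup>2 = (a - b)\<^sup>2 (a + b)\<^sup>2\<close>.\<close>
  define a where "a = sqrt x"
  define b where "b = sqrt q"
  have a: "0 < a" "a \<le> 1" "x = a^2" using assms False by (auto simp: a_def)
  have b: "0 < b" "b \<le> 1" "q = b^2" using assms by (auto simp: b_def)
  have "ln (b / a) \<le> b / a - 1" using a b by (intro ln_le_minus_one) auto
  hence "a * (ln b - ln a) \<le> a * (b / a - 1)" using a b by (intro mult_left_mono) (auto simp: ln_div)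
  also have "\<dots> = b - a" using a by (simp add: field_simps)
  finally have "a * (a * (ln b - ln a)) \<le> a * (b - a)" using a by (intro mult_left_mono) auto
  moreover have "ln x = 2 * ln a" "ln q = 2 * ln b" using a b by (simp_all add: ln_realpow)
  ultimately have sq: "(a - b)^2 \<le> x * (ln x - ln q) + q - x"
    using a b by (simp add: algebra_simps power2_eq_square)
  have "(a + b)^2 \<le> 2^2" using a b by (intro power_mono) auto
  have "(x - q)^2 = (a - b)^2 * (a + b)^2" using a b by (simp add: algebra_simps power2_eq_square)
  also have "\<dots> \<le> (a - b)^2 * 4" using \<open>(a + b)^2 \<le> 2^2\<close> by (intro mult_left_mono) auto
  finally show ?thesis using sq by simp
qed

lemma entropy_term_le_chi_sq_term:
  fixes x q :: real
  assumes "0 \<le> x" "0 < q"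
  shows "x * (ln x - ln q) \<le> (x - q)^2 / q + x - q"
proof (cases "x = 0")
  case True
  thus ?thesis using assms by (simp add: power2_eq_square)
next
  case False
  hence x: "0 < x" using assms by simp
  have "ln (x / q) \<le> x / q - 1" using x assms by (intro ln_le_minus_one) auto
  hence "x * (ln x - ln q) \<le> x * (x / q - 1)" using x assms by (intro mult_left_mono) (auto simp: ln_div)
  also have "\<dots> = (x - q)^2 / q + x - q" using assms by (simp add: field_simps power2_eq_square)
  finally show ?thesis .
qed

lemma sq_diff_le_diff_mult_ln_diff:
  fixes a b :: real
  assumes "0 < a" "a \<le> 1" "0 < b" "b \<le> 1"
  shows "(a - b)^2 \<le> (a - b) * (ln a - ln b)"
proof -
  have ordered: "(a - b)^2 \<le> (a - b) * (ln a - ln b)" if "0 < b" "b \<le> a" "a \<le> 1" for a b :: real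
  proof -
    have "ln (b / a) \<le> b / a - 1" using that by (intro ln_le_minus_one) auto
    hence "(a - b) / a \<le> ln a - ln b" using that by (simp add: ln_div field_simps)
    moreover have "(a - b) * 1 \<le> (a - b) * (1 / a)" using that by (intro mult_left_mono) auto
    hence "a - b \<le> (a - b) / a" by simp
    ultimately show ?thesis using that by (simp add: power2_eq_square mult_left_mono)
  qed
  show ?thesis
  proof (cases "b \<le> a")
    case True
    thus ?thesis using ordered assms by blast
  next
    case False
    hence "(b - a)^2 \<le> (b - a) * (ln b - ln a)" using ordered[of a b] assms by simp
    thus ?thesis by (simp add: power2_commute algebra_simps)
  qed
qed

lemma abs_ln_diff_le:
  fixes a b \<rho> :: real
  assumes "0 < \<rho>" "\<rho> \<le> a" "\<rho> \<le> b"
  shows "\<bar>ln a - ln b\<bar> \<le> \<bar>a - b\<bar> / \<rho>"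
proof -
  have ordered: "ln a - ln b \<le> (a - b) / \<rho>" if "\<rho> \<le> b" "b \<le> a" for a b
  proof -
    have "ln (a / b) \<le> a / b - 1" using that assms by (intro ln_le_minus_one) auto
    hence "ln a - ln b \<le> (a - b) / b" using that assms by (simp add: ln_div field_simps)
    also have "\<dots> \<le> (a - b) / \<rho>" using that assms by (intro divide_left_mono) auto
    finally show ?thesis .
  qed
  show ?thesis
  proof (cases "b \<le> a")
    case True
    thus ?thesis using ordered[of b a] assms by (simp add: abs_of_nonneg)
  next
    case False
    thus ?thesis using ordered[of a b] assms by (simp add: abs_of_nonpos)
  qed
qed

lemma mult_le_half_sum_squares:
  fixes d e c :: real
  assumes "\<bar>e\<bar> \<le> c"
  shows "d * e \<le> (d^2 + c^2) / 2"
proof -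
  have "d * e \<le> \<bar>d\<bar> * \<bar>e\<bar>" by (simp flip: abs_mult)
  also have "\<dots> \<le> \<bar>d\<bar> * c" using assms by (intro mult_left_mono) auto
  also have "\<dots> \<le> (d^2 + c^2) / 2" using sum_squares_bound[of "\<bar>d\<bar>" c] by simp
  finally show ?thesis .
qed

lemma convex_comb_ge:
  fixes a b h \<delta> :: real
  assumes "\<delta> \<le> a" "\<delta> \<le> b" "0 \<le> h" "h \<le> 1"
  shows "\<delta> \<le> a + h * (b - a)"
proof -
  have "(1 - h) * \<delta> + h * \<delta> \<le> (1 - h) * a + h * b"
    using assms by (intro add_mono mult_left_mono) auto
  thus ?thesis by (simp add: algebra_simps)
qed

lemma prod_le_factor:
  fixes g :: "'a \<Rightarrow> real"
  assumes "finite I" "k \<in> I" "\<And>j. j \<in> I \<Longrightarrow> 0 \<le> g j \<and> g j \<le> 1"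
  shows "prod g I \<le> g k"
proof -
  have "prod g I = g k * prod g (I - {k})" using assms by (simp add: prod.remove)
  also have "\<dots> \<le> g k * 1" using assms by (intro mult_left_mono prod_le_1) auto
  finally show ?thesis by simp
qed

lemma DERIV_nonneg_imp_le_within_nonneg:
  fixes g g' :: "real \<Rightarrow> real"
  assumes ab: "0 \<le> a" "a \<le> b"
    and deriv: "\<And>t. a \<le> t \<Longrightarrow> t \<le> b \<Longrightarrow> (g has_real_derivative g' t) (at t within {0..})"
    and nonneg: "\<And>t. a < t \<Longrightarrow> t < b \<Longrightarrow> 0 \<le> g' t"
  shows "g a \<le> g b"
proof (rule DERIV_nonneg_imp_increasing_open[OF ab(2)])
  fix x assume x: "a < x" "x < b"
  have "(g has_real_derivative g' x) (at x within {0<..})"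
    by (rule DERIV_subset[where s="{0..}"]) (use deriv[of x] x in auto)
  moreover have "at x within {0<..} = at x" using x ab by (intro at_within_open) auto
  ultimately show "\<exists>y. DERIV g x :> y \<and> 0 \<le> y" using nonneg x by auto
next
  show "continuous_on {a..b} g"
    unfolding continuous_on_eq_continuous_within
  proof
    fix t assume t: "t \<in> {a..b}"
    have "continuous (at t within {0..}) g" using deriv[of t] t by (intro DERIV_continuous) auto
    thus "continuous (at t within {a..b}) g" by (rule continuous_within_subset) (use ab in auto)
  qed
qed

lemma DERIV_zero_imp_eq_within_nonneg:
  fixes g :: "real \<Rightarrow> real"
  assumes ab: "0 \<le> a" "a \<le> b"
    and deriv: "\<And>t. a \<le> t \<Longrightarrow> t \<le> b \<Longrightarrow> (g has_real_derivative 0) (at t within {0..})"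
  shows "g a = g b"
proof -
  have "g a \<le> g b" by (rule DERIV_nonneg_imp_le_within_nonneg[OF ab deriv]) auto
  moreover have "- g a \<le> - g b"
    by (rule DERIV_nonneg_imp_le_within_nonneg[OF ab DERIV_minus[OF deriv]]) auto
  ultimately show ?thesis by simp
qed

section \<open>The state space\<close>

lemma continuous_on_state_coordinate [continuous_intros]:
  "continuous_on S (\<lambda>x :: nat \<Rightarrow> nat \<Rightarrow> real. x i s)"
proof (rule continuous_on_product_then_coordinatewise)
  show "continuous_on S (\<lambda>x :: nat \<Rightarrow> nat \<Rightarrow> real. x i)"
    by (rule continuous_on_product_then_coordinatewise) (rule continuous_on_id)
qed

lemma compact_PiE_UNIV:
  fixes K :: "'b::topological_space set"
  assumes "compact K"
  shows "compact (Pi\<^sub>E (UNIV :: 'a set) (\<lambda>_. K))"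
proof -
  have "compactin (product_topology (\<lambda>i::'a. euclidean) UNIV) (Pi\<^sub>E UNIV (\<lambda>_. K))"
    using assms by (simp add: compactin_PiE)
  thus ?thesis by (simp add: euclidean_product_topology)
qed

lemma compact_unit_box_states: "compact {x :: nat \<Rightarrow> nat \<Rightarrow> real. \<forall>i s. x i s \<in> {0..1}}"
proof -
  have "{x :: nat \<Rightarrow> nat \<Rightarrow> real. \<forall>i s. x i s \<in> {0..1}} = Pi\<^sub>E UNIV (\<lambda>_. Pi\<^sub>E UNIV (\<lambda>_. {0..1}))"
    by (auto simp: PiE_UNIV_domain Pi_iff)
  also have "compact \<dots>" by (intro compact_PiE_UNIV compact_Icc)
  finally show ?thesis .
qed

lemma simplex_prodI:
  assumes "\<And>i s. i < n \<Longrightarrow> s < m i \<Longrightarrow> 0 \<le> x i s"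
    and "\<And>i. i < n \<Longrightarrow> (\<Sum>s<m i. x i s) = 1"
    and "\<And>i s. \<not> (i < n \<and> s < m i) \<Longrightarrow> x i s = 0"
  shows "x \<in> simplex_prod n m"
  using assms unfolding simplex_prod_def by auto

lemma simplex_prod_nonneg: "x \<in> simplex_prod n m \<Longrightarrow> i < n \<Longrightarrow> s < m i \<Longrightarrow> 0 \<le> x i s"
  by (simp add: simplex_prod_def)

lemma simplex_prod_sum: "x \<in> simplex_prod n m \<Longrightarrow> i < n \<Longrightarrow> (\<Sum>s<m i. x i s) = 1"
  by (simp add: simplex_prod_def)

lemma simplex_prod_outside: "x \<in> simplex_prod n m \<Longrightarrow> \<not> (i < n \<and> s < m i) \<Longrightarrow> x i s = 0"
  by (auto simp: simplex_prod_def)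

lemma simplex_prod_le_1: "x \<in> simplex_prod n m \<Longrightarrow> i < n \<Longrightarrow> s < m i \<Longrightarrow> x i s \<le> 1"
  using member_le_sum[of s "{..<m i}" "x i"] by (simp add: simplex_prod_nonneg simplex_prod_sum)

lemma simplex_prod_unit_interval: "x \<in> simplex_prod n m \<Longrightarrow> x i s \<in> {0..1}"
  by (cases "i < n \<and> s < m i") (auto simp: simplex_prod_nonneg simplex_prod_le_1 simplex_prod_outside)

lemma closed_simplex_prod: "closed (simplex_prod n m)"
proof -
  have const: "open {x :: nat \<Rightarrow> nat \<Rightarrow> real. c}" for c by (cases c) auto
  show ?thesis
    unfolding simplex_prod_def
    by (intro closed_Collect_conj closed_Collect_all closed_Collect_imp closed_Collect_le
        closed_Collect_eq continuous_intros const)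
qed

lemma compact_simplex_prod: "compact (simplex_prod n m)"
proof -
  have "simplex_prod n m = {x. \<forall>i s. x i s \<in> {0..1}} \<inter> simplex_prod n m"
    using simplex_prod_unit_interval by blast
  thus ?thesis by (metis compact_unit_box_states closed_simplex_prod compact_Int_closed)
qed

lemma simplex_prod_convex_comb:
  assumes x: "x \<in> simplex_prod n m" and y: "y \<in> simplex_prod n m" and h: "0 \<le> h" "h \<le> 1"
  shows "(\<lambda>i s. x i s + h * (y i s - x i s)) \<in> simplex_prod n m"
proof (rule simplex_prodI)
  fix i s assume "i < n" "s < m i"
  thus "0 \<le> x i s + h * (y i s - x i s)"
    using convex_comb_ge[of 0] h simplex_prod_nonneg[OF x] simplex_prod_nonneg[OF y] by simp
next
  fix i assume "i < n"
  thus "(\<Sum>s<m i. x i s + h * (y i s - x i s)) = 1"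
    using simplex_prod_sum[OF x] simplex_prod_sum[OF y]
    by (simp add: sum.distrib sum_subtractf flip: sum_distrib_left)
qed (simp add: simplex_prod_outside[OF x] simplex_prod_outside[OF y])

definition restrict_state :: "nat \<Rightarrow> (nat \<Rightarrow> nat) \<Rightarrow> (nat \<Rightarrow> nat \<Rightarrow> real) \<Rightarrow> nat \<Rightarrow> nat \<Rightarrow> real" where
  "restrict_state n m x = (\<lambda>i s. if i < n \<and> s < m i then x i s else 0)"

lemma restrict_state_eq: "i < n \<Longrightarrow> s < m i \<Longrightarrow> restrict_state n m x i s = x i s"
  by (simp add: restrict_state_def)

lemma restrict_state_simplex_prod: "x \<in> simplex_prod n m \<Longrightarrow> restrict_state n m x = x"
  by (auto simp: restrict_state_def fun_eq_iff simplex_prod_outside)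

lemma util_restrict_state: "util n m E A i s (restrict_state n m x) = util n m E A i s x"
  unfolding util_def restrict_state_def neighbors_def by (intro sum.cong refl) auto

lemma logit_restrict_state: "logit n m E A \<beta> i s (restrict_state n m x) = logit n m E A \<beta> i s x"
  by (simp add: logit_def util_restrict_state)

lemma util_lincomb:
  "util n m E A i s (\<lambda>j t. a * x j t + b * y j t) = a * util n m E A i s x + b * util n m E A i s y"
  unfolding util_def by (simp add: algebra_simps sum.distrib sum_distrib_left)

lemma util_scale: "util n m E A i s (\<lambda>j t. a * x j t) = a * util n m E A i s x"
  unfolding util_def by (simp add: algebra_simps sum_distrib_left)

lemma util_diff:
  "util n m E A i s (\<lambda>j t. x j t - y j t) = util n m E A i s x - util n m E A i s y"
  using util_lincomb[of n m E A i s 1 x "-1" y] by simp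

lemma payoff_eq_util: "payoff n m E A i x = (\<Sum>s<m i. x i s * util n m E A i s x)"
  unfolding payoff_def util_def
  by (subst sum.swap) (simp add: sum_distrib_left mult.assoc)

lemma continuous_on_util [continuous_intros]: "continuous_on S (util n m E A i s)"
  unfolding util_def by (intro continuous_intros)

lemma tendsto_util:
  assumes "\<And>j t. j < n \<Longrightarrow> t < m j \<Longrightarrow> ((\<lambda>k. y k j t) \<longlongrightarrow> x j t) F"
  shows "((\<lambda>k. util n m E A i s (y k)) \<longlongrightarrow> util n m E A i s x) F"
  unfolding util_def
  by (intro tendsto_sum tendsto_mult tendsto_const assms) (auto simp: neighbors_def)

lemma abs_diff_le_state_dist:
  assumes "i < n" "s < m i"
  shows "\<bar>x i s - y i s\<bar> \<le> state_dist n m x y"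
proof -
  have "\<bar>x i s - y i s\<bar> \<le> (\<Sum>s<m i. \<bar>x i s - y i s\<bar>)"
    using assms by (intro member_le_sum) auto
  also have "\<dots> \<le> state_dist n m x y"
    unfolding state_dist_def using assms by (intro member_le_sum) (auto intro!: sum_nonneg)
  finally show ?thesis .
qed

section \<open>Logit responses\<close>

locale logit_game =
  fixes n :: nat and m :: "nat \<Rightarrow> nat" and E :: "nat \<Rightarrow> nat \<Rightarrow> bool"
    and A :: "nat \<Rightarrow> nat \<Rightarrow> nat \<Rightarrow> nat \<Rightarrow> real" and \<beta> :: real
  assumes strategies_nonempty: "\<And>i. i < n \<Longrightarrow> 1 \<le> m i"
begin

abbreviation "\<Delta> \<equiv> simplex_prod n m"
abbreviation "u i s x \<equiv> util n m E A i s x"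
abbreviation "f i s x \<equiv> logit n m E A \<beta> i s x"

definition logit_denom :: "nat \<Rightarrow> (nat \<Rightarrow> nat \<Rightarrow> real) \<Rightarrow> real" where
  "logit_denom i x = (\<Sum>s<m i. exp (\<beta> * u i s x))"

definition logit_state :: "(nat \<Rightarrow> nat \<Rightarrow> real) \<Rightarrow> nat \<Rightarrow> nat \<Rightarrow> real" where
  "logit_state x = restrict_state n m (\<lambda>i s. f i s x)"

lemma logit_denom_pos: "i < n \<Longrightarrow> 0 < logit_denom i x"
  unfolding logit_denom_def using strategies_nonempty[of i]
  by (intro sum_pos) (auto simp: lessThan_empty_iff)

lemma logit_denom_nonzero: "i < n \<Longrightarrow> logit_denom i x \<noteq> 0"
  using logit_denom_pos[of i x] by simp

lemma logit_eq_exp_div: "f i s x = exp (\<beta> * u i s x) / logit_denom i x"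
  by (simp add: logit_def logit_denom_def)

lemma logit_pos: "i < n \<Longrightarrow> 0 < f i s x"
  using logit_denom_pos[of i x] by (simp add: logit_eq_exp_div)

lemma logit_sum: "i < n \<Longrightarrow> (\<Sum>s<m i. f i s x) = 1"
  using logit_denom_pos[of i x]
  by (simp add: logit_eq_exp_div logit_denom_def flip: sum_divide_distrib)

lemma logit_le_1: "i < n \<Longrightarrow> s < m i \<Longrightarrow> f i s x \<le> 1"
  using member_le_sum[of s "{..<m i}" "\<lambda>s. f i s x"] logit_pos[of i] logit_sum[of i x]
  by (simp add: less_imp_le)

lemma ln_logit: "i < n \<Longrightarrow> ln (f i s x) = \<beta> * u i s x - ln (logit_denom i x)"
  using logit_denom_pos[of i x] by (simp add: logit_eq_exp_div ln_div)

lemma logit_state_eq: "i < n \<Longrightarrow> s < m i \<Longrightarrow> logit_state x i s = f i s x"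
  by (simp add: logit_state_def restrict_state_eq)

lemma logit_state_in_simplex: "logit_state x \<in> \<Delta>"
  by (rule simplex_prodI)
    (auto simp: logit_state_eq logit_sum restrict_state_def logit_state_def intro: less_imp_le logit_pos)

lemma continuous_on_logit_denom [continuous_intros]: "continuous_on S (logit_denom i)"
  unfolding logit_denom_def by (intro continuous_intros)

lemma continuous_on_logit: "i < n \<Longrightarrow> continuous_on S (f i s)"
  unfolding logit_eq_exp_div by (intro continuous_intros) (metis logit_denom_pos less_irrefl)

lemma tendsto_logit:
  assumes "i < n" "\<And>j t. j < n \<Longrightarrow> t < m j \<Longrightarrow> ((\<lambda>k. y k j t) \<longlongrightarrow> x j t) F"
  shows "((\<lambda>k. f i s (y k)) \<longlongrightarrow> f i s x) F"
  unfolding logit_eq_exp_div logit_denom_def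
  using logit_denom_pos[OF assms(1), of x]
  by (intro tendsto_divide tendsto_sum tendsto_exp tendsto_mult tendsto_const tendsto_util assms(2))
    (auto simp: logit_denom_def)

lemma logit_direction_identity:
  assumes x: "x \<in> \<Delta>" and i: "i < n"
  shows "(\<Sum>s<m i. (logit_state x i s - x i s) * (ln (x i s) + 1))
           + \<beta> * (\<Sum>s<m i. f i s x * u i s (\<lambda>j t. logit_state x j t - x j t))
         = \<beta> * (\<Sum>s<m i. logit_state x i s * u i s (logit_state x)) - \<beta> * (\<Sum>s<m i. x i s * u i s x)
           - (\<Sum>s<m i. (f i s x - x i s) * (ln (f i s x) - ln (x i s)))"
proof -
  define R where "R s = \<beta> * (f i s x * u i s (logit_state x)) - \<beta> * (x i s * u i s x)
      - (f i s x - x i s) * (ln (f i s x) - ln (x i s))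
      + (f i s x - x i s) + ln (logit_denom i x) * (x i s - f i s x)" for s
  have "(logit_state x i s - x i s) * (ln (x i s) + 1)
      + \<beta> * (f i s x * u i s (\<lambda>j t. logit_state x j t - x j t)) = R s" if s: "s < m i" for s
    unfolding R_def util_diff logit_state_eq[OF i s] ln_logit[OF i] by (simp add: algebra_simps)
  hence "(\<Sum>s<m i. (logit_state x i s - x i s) * (ln (x i s) + 1))
      + \<beta> * (\<Sum>s<m i. f i s x * u i s (\<lambda>j t. logit_state x j t - x j t)) = (\<Sum>s<m i. R s)"
    unfolding sum_distrib_left sum.distrib[symmetric] by (intro sum.cong) auto
  also have "\<dots> = \<beta> * (\<Sum>s<m i. f i s x * u i s (logit_state x)) - \<beta> * (\<Sum>s<m i. x i s * u i s x)
        - (\<Sum>s<m i. (f i s x - x i s) * (ln (f i s x) - ln (x i s)))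
      + ((\<Sum>s<m i. f i s x) - (\<Sum>s<m i. x i s))
      + ln (logit_denom i x) * ((\<Sum>s<m i. x i s) - (\<Sum>s<m i. f i s x))"
    unfolding R_def
    by (simp add: sum.distrib sum_subtractf sum_distrib_left sum_distrib_right algebra_simps)
  also have "(\<Sum>s<m i. f i s x * u i s (logit_state x)) = (\<Sum>s<m i. logit_state x i s * u i s (logit_state x))"
    by (intro sum.cong) (auto simp: logit_state_eq[OF i])
  finally show ?thesis using logit_sum[OF i] simplex_prod_sum[OF x i] by simp
qed

text \<open>On the compact set \<open>\<Delta>\<close> the positive continuous function \<open>\<Prod>\<^sub>i\<^sub>,\<^sub>s f i s\<close>
  has a positive minimum, which bounds every single logit probability from below.\<close>
lemma logit_uniform_lower_bound: "\<exists>\<delta>>0. \<forall>x\<in>\<Delta>. \<forall>i<n. \<forall>s<m i. \<delta> \<le> f i s x"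
proof -
  define \<Phi> where "\<Phi> x = (\<Prod>i<n. \<Prod>s<m i. f i s x)" for x
  have "continuous_on \<Delta> \<Phi>" unfolding \<Phi>_def by (intro continuous_on_prod continuous_on_logit) auto
  then obtain p where p: "p \<in> \<Delta>" "\<And>y. y \<in> \<Delta> \<Longrightarrow> \<Phi> p \<le> \<Phi> y"
    using continuous_attains_inf[OF compact_simplex_prod, of n m \<Phi>] logit_state_in_simplex by blast
  have "0 < \<Phi> p" unfolding \<Phi>_def by (intro prod_pos logit_pos) auto
  moreover have "\<Phi> x \<le> f i s x" if "i < n" "s < m i" for x i s
  proof -
    have "\<Phi> x \<le> (\<Prod>s<m i. f i s x)" unfolding \<Phi>_def
      by (intro prod_le_factor) (auto intro!: prod_nonneg prod_le_1 logit_le_1 less_imp_le[OF logit_pos] that)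
    also have "\<dots> \<le> f i s x"
      by (intro prod_le_factor) (auto intro!: logit_le_1 less_imp_le[OF logit_pos] that)
    finally show ?thesis .
  qed
  ultimately show ?thesis using p by (meson order.trans)
qed

lemma QRE_in_simplex: "is_QRE n m E A \<beta> x \<Longrightarrow> x \<in> \<Delta>"
  and QRE_eq_logit: "is_QRE n m E A \<beta> x \<Longrightarrow> i < n \<Longrightarrow> s < m i \<Longrightarrow> x i s = f i s x"
  by (simp_all add: is_QRE_def)

definition logit_floor :: real where
  "logit_floor = (SOME \<delta>. \<delta> > 0 \<and> (\<forall>x\<in>\<Delta>. \<forall>i<n. \<forall>s<m i. \<delta> \<le> f i s x))"

lemma logit_floor_pos: "0 < logit_floor"
  and logit_ge_floor: "x \<in> \<Delta> \<Longrightarrow> i < n \<Longrightarrow> s < m i \<Longrightarrow> logit_floor \<le> f i s x"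
  using someI_ex[OF logit_uniform_lower_bound] unfolding logit_floor_def[symmetric] by auto

end

section \<open>The Lyapunov function of a competitive game\<close>

locale competitive_game = logit_game +
  fixes \<omega> :: "nat \<Rightarrow> real"
  assumes weights_pos: "\<And>i. i < n \<Longrightarrow> 0 < \<omega> i"
    and weighted_zero_sum: "\<And>x. x \<in> simplex_prod n m \<Longrightarrow> (\<Sum>i<n. \<omega> i * payoff n m E A i x) = 0"
begin

lemma weights_nonneg: "i < n \<Longrightarrow> 0 \<le> \<omega> i"
  using weights_pos[of i] by simp

definition payoff_form :: "(nat \<Rightarrow> nat \<Rightarrow> real) \<Rightarrow> (nat \<Rightarrow> nat \<Rightarrow> real) \<Rightarrow> real" where
  "payoff_form a b = (\<Sum>i<n. \<omega> i * (\<Sum>s<m i. a i s * u i s b))"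

definition wsqdist :: "(nat \<Rightarrow> nat \<Rightarrow> real) \<Rightarrow> (nat \<Rightarrow> nat \<Rightarrow> real) \<Rightarrow> real" where
  "wsqdist x y = (\<Sum>i<n. \<omega> i * (\<Sum>s<m i. (x i s - y i s)^2))"

definition residual :: "(nat \<Rightarrow> nat \<Rightarrow> real) \<Rightarrow> real" where
  "residual x = (\<Sum>i<n. \<omega> i * (\<Sum>s<m i. (x i s - f i s x)^2))"

definition lyapunov :: "(nat \<Rightarrow> nat \<Rightarrow> real) \<Rightarrow> real" where
  "lyapunov x = (\<Sum>i<n. \<omega> i * ((\<Sum>s<m i. x i s * ln (x i s)) + ln (logit_denom i x)))"

definition dissipation :: "(nat \<Rightarrow> nat \<Rightarrow> real) \<Rightarrow> real" where
  "dissipation x = (\<Sum>i<n. \<omega> i * (\<Sum>s<m i. (f i s x - x i s) * (ln (f i s x) - ln (x i s))))"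

definition lyapunov_deriv :: "(nat \<Rightarrow> nat \<Rightarrow> real) \<Rightarrow> (nat \<Rightarrow> nat \<Rightarrow> real) \<Rightarrow> real" where
  "lyapunov_deriv x d = (\<Sum>i<n. \<omega> i *
     ((\<Sum>s<m i. d i s * (ln (x i s) + 1)) + \<beta> * (\<Sum>s<m i. f i s x * u i s d)))"

lemma payoff_form_self: "x \<in> \<Delta> \<Longrightarrow> payoff_form x x = 0"
  using weighted_zero_sum[of x] by (simp add: payoff_form_def payoff_eq_util)

lemma payoff_form_lincomb:
  "payoff_form (\<lambda>i s. a * x i s + b * y i s) (\<lambda>i s. c * z i s + d * w i s)
     = a * c * payoff_form x z + a * d * payoff_form x w + b * c * payoff_form y z + b * d * payoff_form y w"
  unfolding payoff_form_def util_lincomb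
  by (simp add: algebra_simps sum.distrib sum_distrib_left)

text \<open>Expand the vanishing form at the midpoint of \<open>x\<close> and \<open>y\<close>.\<close>
lemma payoff_form_antisym:
  assumes x: "x \<in> \<Delta>" and y: "y \<in> \<Delta>"
  shows "payoff_form x y + payoff_form y x = 0"
proof -
  have "(\<lambda>i s. x i s + 1 / 2 * (y i s - x i s)) = (\<lambda>i s. 1 / 2 * x i s + 1 / 2 * y i s)"
    by (simp add: fun_eq_iff algebra_simps)
  hence "(\<lambda>i s. 1 / 2 * x i s + 1 / 2 * y i s) \<in> \<Delta>"
    using simplex_prod_convex_comb[OF x y, of "1 / 2"] by simp
  hence "0 = payoff_form (\<lambda>i s. 1 / 2 * x i s + 1 / 2 * y i s) (\<lambda>i s. 1 / 2 * x i s + 1 / 2 * y i s)"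
    by (simp add: payoff_form_self)
  also have "\<dots> = (payoff_form x y + payoff_form y x) / 4"
    unfolding payoff_form_lincomb using payoff_form_self[OF x] payoff_form_self[OF y] by simp
  finally show ?thesis by simp
qed

lemma payoff_form_diff_self:
  "x \<in> \<Delta> \<Longrightarrow> y \<in> \<Delta> \<Longrightarrow> payoff_form (\<lambda>i s. x i s - y i s) (\<lambda>i s. x i s - y i s) = 0"
  using payoff_form_lincomb[of 1 x "-1" y 1 x "-1" y] payoff_form_antisym[of x y]
    payoff_form_self[of x] payoff_form_self[of y]
  by simp

lemma residual_nonneg: "0 \<le> residual x"
  unfolding residual_def by (auto intro!: sum_nonneg mult_nonneg_nonneg weights_nonneg)

lemma residual_QRE: "is_QRE n m E A \<beta> x \<Longrightarrow> residual x = 0"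
  unfolding residual_def by (intro sum.neutral) (simp add: QRE_eq_logit)

lemma residual_pos:
  assumes "i < n" "s < m i" "x i s \<noteq> f i s x"
  shows "0 < residual x"
proof -
  have "0 < (\<Sum>s<m i. (x i s - f i s x)^2)"
    using assms by (intro sum_pos2[where i=s]) auto
  hence "0 < \<omega> i * (\<Sum>s<m i. (x i s - f i s x)^2)"
    using weights_pos[OF assms(1)] by simp
  thus ?thesis
    unfolding residual_def using assms
    by (intro sum_pos2[where i=i]) (auto intro!: mult_nonneg_nonneg sum_nonneg weights_nonneg)
qed

lemma wsqdist_nonneg: "0 \<le> wsqdist x y"
  unfolding wsqdist_def by (auto intro!: sum_nonneg mult_nonneg_nonneg weights_nonneg)

lemma weighted_sq_le_wsqdist:
  assumes "i < n" "s < m i"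
  shows "\<omega> i * (x i s - y i s)^2 \<le> wsqdist x y"
proof -
  have "\<omega> i * (x i s - y i s)^2 \<le> \<omega> i * (\<Sum>s<m i. (x i s - y i s)^2)"
    using assms by (intro mult_left_mono member_le_sum weights_nonneg) auto
  also have "\<dots> \<le> wsqdist x y"
    unfolding wsqdist_def using assms
    by (intro member_le_sum) (auto intro!: mult_nonneg_nonneg sum_nonneg weights_nonneg)
  finally show ?thesis .
qed

lemma lyapunov_eq_weighted_KL:
  assumes x: "x \<in> \<Delta>"
  shows "lyapunov x = (\<Sum>i<n. \<omega> i * (\<Sum>s<m i. x i s * (ln (x i s) - ln (f i s x))))"
proof -
  have KL: "(\<Sum>s<m i. x i s * (ln (x i s) - ln (f i s x))) =
      (\<Sum>s<m i. x i s * ln (x i s)) + ln (logit_denom i x) - \<beta> * (\<Sum>s<m i. x i s * u i s x)"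
    if i: "i < n" for i
  proof -
    have "(\<Sum>s<m i. x i s * (ln (x i s) - ln (f i s x))) =
        (\<Sum>s<m i. x i s * ln (x i s) - \<beta> * (x i s * u i s x) + ln (logit_denom i x) * x i s)"
      by (rule sum.cong) (simp_all add: ln_logit[OF i] algebra_simps)
    also have "\<dots> = (\<Sum>s<m i. x i s * ln (x i s)) - \<beta> * (\<Sum>s<m i. x i s * u i s x)
        + ln (logit_denom i x) * (\<Sum>s<m i. x i s)"
      by (simp add: sum.distrib sum_subtractf sum_distrib_left)
    finally show ?thesis using simplex_prod_sum[OF x i] by simp
  qed
  have "(\<Sum>i<n. \<omega> i * (\<Sum>s<m i. x i s * (ln (x i s) - ln (f i s x)))) =
      (\<Sum>i<n. \<omega> i * ((\<Sum>s<m i. x i s * ln (x i s)) + ln (logit_denom i x))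
         - \<beta> * (\<omega> i * (\<Sum>s<m i. x i s * u i s x)))"
    by (intro sum.cong refl) (simp only: lessThan_iff KL, simp add: algebra_simps)
  also have "\<dots> = lyapunov x - \<beta> * payoff_form x x"
    by (simp add: lyapunov_def payoff_form_def sum_subtractf sum_distrib_left)
  finally show ?thesis using payoff_form_self[OF x] by simp
qed

lemma residual_le_4_lyapunov:
  assumes x: "x \<in> \<Delta>"
  shows "residual x \<le> 4 * lyapunov x"
proof -
  have "\<omega> i * (\<Sum>s<m i. (x i s - f i s x)^2) / 4 \<le> \<omega> i * (\<Sum>s<m i. x i s * (ln (x i s) - ln (f i s x)))"
    if i: "i < n" for i
  proof -
    have "(\<Sum>s<m i. (x i s - f i s x)^2 / 4)
        \<le> (\<Sum>s<m i. x i s * (ln (x i s) - ln (f i s x)) + f i s x - x i s)"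
      using i by (intro sum_mono entropy_term_ge_sq_diff)
        (auto simp: simplex_prod_nonneg[OF x] simplex_prod_le_1[OF x] logit_pos logit_le_1)
    also have "\<dots> = (\<Sum>s<m i. x i s * (ln (x i s) - ln (f i s x)))"
      using i by (simp add: sum.distrib sum_subtractf logit_sum simplex_prod_sum[OF x])
    finally show ?thesis using weights_pos[OF i]
      by (simp add: mult_left_mono flip: sum_divide_distrib times_divide_eq_right)
  qed
  hence "(\<Sum>i<n. \<omega> i * (\<Sum>s<m i. (x i s - f i s x)^2) / 4) \<le> lyapunov x"
    unfolding lyapunov_eq_weighted_KL[OF x] by (intro sum_mono) auto
  thus ?thesis by (simp add: residual_def flip: sum_divide_distrib)
qed

lemma lyapunov_nonneg: "x \<in> \<Delta> \<Longrightarrow> 0 \<le> lyapunov x"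
  using residual_le_4_lyapunov[of x] residual_nonneg[of x] by linarith

lemma lyapunov_le_residual_div:
  assumes x: "x \<in> \<Delta>" and \<delta>: "0 < \<delta>" "\<And>i s. i < n \<Longrightarrow> s < m i \<Longrightarrow> \<delta> \<le> f i s x"
  shows "lyapunov x \<le> residual x / \<delta>"
proof -
  have "\<omega> i * (\<Sum>s<m i. x i s * (ln (x i s) - ln (f i s x))) \<le> \<omega> i * (\<Sum>s<m i. (x i s - f i s x)^2) / \<delta>"
    if i: "i < n" for i
  proof -
    have "x i s * (ln (x i s) - ln (f i s x)) \<le> (x i s - f i s x)^2 / \<delta> + x i s - f i s x"
      if s: "s < m i" for s
    proof -
      have "x i s * (ln (x i s) - ln (f i s x)) \<le> (x i s - f i s x)^2 / f i s x + x i s - f i s x"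
        using i s by (intro entropy_term_le_chi_sq_term) (auto simp: simplex_prod_nonneg[OF x] logit_pos)
      also have "(x i s - f i s x)^2 / f i s x \<le> (x i s - f i s x)^2 / \<delta>"
        using i s \<delta> by (intro divide_left_mono) (auto simp: logit_pos)
      finally show ?thesis by simp
    qed
    hence "(\<Sum>s<m i. x i s * (ln (x i s) - ln (f i s x)))
        \<le> (\<Sum>s<m i. (x i s - f i s x)^2 / \<delta> + x i s - f i s x)"
      by (intro sum_mono) auto
    also have "\<dots> = (\<Sum>s<m i. (x i s - f i s x)^2) / \<delta>"
      using i by (simp add: sum.distrib sum_subtractf logit_sum simplex_prod_sum[OF x] sum_divide_distrib)
    finally show ?thesis using weights_pos[OF i] by (simp add: mult_left_mono flip: times_divide_eq_right)
  qed
  hence "lyapunov x \<le> (\<Sum>i<n. \<omega> i * (\<Sum>s<m i. (x i s - f i s x)^2) / \<delta>)"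
    unfolding lyapunov_eq_weighted_KL[OF x] by (intro sum_mono) auto
  thus ?thesis by (simp add: residual_def sum_divide_distrib)
qed

lemma residual_le_dissipation:
  assumes x: "x \<in> \<Delta>" and pos: "\<And>i s. i < n \<Longrightarrow> s < m i \<Longrightarrow> 0 < x i s"
  shows "residual x \<le> dissipation x"
  unfolding residual_def dissipation_def
proof (intro sum_mono mult_left_mono)
  fix i s assume "i \<in> {..<n}" "s \<in> {..<m i}"
  thus "(x i s - f i s x)^2 \<le> (f i s x - x i s) * (ln (f i s x) - ln (x i s))"
    using sq_diff_le_diff_mult_ln_diff[of "f i s x" "x i s"]
    by (simp add: logit_pos logit_le_1 pos simplex_prod_le_1[OF x] power2_commute)
qed (simp add: weights_nonneg)

lemma has_derivative_lyapunov:
  assumes deriv: "\<And>i s. i < n \<Longrightarrow> s < m i \<Longrightarrow> ((\<lambda>\<tau>. \<gamma> \<tau> i s) has_real_derivative \<gamma>' i s) (at t within S)"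
    and pos: "\<And>i s. i < n \<Longrightarrow> s < m i \<Longrightarrow> 0 < \<gamma> t i s"
  shows "((\<lambda>\<tau>. lyapunov (\<gamma> \<tau>)) has_real_derivative lyapunov_deriv (\<gamma> t) \<gamma>') (at t within S)"
proof -
  have d_util: "((\<lambda>\<tau>. u i s (\<gamma> \<tau>)) has_real_derivative u i s \<gamma>') (at t within S)" for i s
    unfolding util_def by (intro DERIV_sum DERIV_cmult deriv) (auto simp: neighbors_def)
  have d_denom: "((\<lambda>\<tau>. logit_denom i (\<gamma> \<tau>)) has_real_derivative
      (\<Sum>s<m i. exp (\<beta> * u i s (\<gamma> t)) * (\<beta> * u i s \<gamma>'))) (at t within S)" for i
    unfolding logit_denom_def by (intro DERIV_sum) (rule derivative_eq_intros d_util refl | simp)+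
  have d_ln_denom: "((\<lambda>\<tau>. ln (logit_denom i (\<gamma> \<tau>))) has_real_derivative
      \<beta> * (\<Sum>s<m i. f i s (\<gamma> t) * u i s \<gamma>')) (at t within S)" if i: "i < n" for i
  proof -
    have "((\<lambda>\<tau>. ln (logit_denom i (\<gamma> \<tau>))) has_real_derivative
        1 / logit_denom i (\<gamma> t) * (\<Sum>s<m i. exp (\<beta> * u i s (\<gamma> t)) * (\<beta> * u i s \<gamma>'))) (at t within S)"
      by (rule derivative_eq_intros d_denom refl | simp add: logit_denom_pos[OF i])+
    also have "1 / logit_denom i (\<gamma> t) * (\<Sum>s<m i. exp (\<beta> * u i s (\<gamma> t)) * (\<beta> * u i s \<gamma>'))
        = \<beta> * (\<Sum>s<m i. f i s (\<gamma> t) * u i s \<gamma>')"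
      by (simp add: logit_eq_exp_div sum_distrib_left sum_divide_distrib algebra_simps)
    finally show ?thesis .
  qed
  have d_entropy: "((\<lambda>\<tau>. \<gamma> \<tau> i s * ln (\<gamma> \<tau> i s)) has_real_derivative \<gamma>' i s * (ln (\<gamma> t i s) + 1))
      (at t within S)" if i: "i < n" and s: "s < m i" for i s
  proof -
    have "((\<lambda>\<tau>. \<gamma> \<tau> i s * ln (\<gamma> \<tau> i s)) has_real_derivative
        \<gamma>' i s * ln (\<gamma> t i s) + \<gamma> t i s * (1 / \<gamma> t i s * \<gamma>' i s)) (at t within S)"
      by (rule derivative_eq_intros deriv[OF i s] refl | simp add: pos[OF i s])+
    also have "\<gamma>' i s * ln (\<gamma> t i s) + \<gamma> t i s * (1 / \<gamma> t i s * \<gamma>' i s) = \<gamma>' i s * (ln (\<gamma> t i s) + 1)"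
      using pos[OF i s] by (simp add: field_simps)
    finally show ?thesis .
  qed
  show ?thesis
    unfolding lyapunov_def lyapunov_deriv_def
    by (intro DERIV_sum DERIV_cmult DERIV_add d_ln_denom d_entropy) auto
qed

lemma lyapunov_deriv_scale: "lyapunov_deriv x (\<lambda>i s. k * d i s) = k * lyapunov_deriv x d"
  unfolding lyapunov_deriv_def util_scale by (simp add: sum_distrib_left sum.distrib algebra_simps)

lemma lyapunov_deriv_toward_logit:
  assumes x: "x \<in> \<Delta>"
  shows "lyapunov_deriv x (\<lambda>i s. k * (logit_state x i s - x i s)) = - k * dissipation x"
proof -
  have "lyapunov_deriv x (\<lambda>i s. logit_state x i s - x i s)
      = (\<Sum>i<n. \<beta> * (\<omega> i * (\<Sum>s<m i. logit_state x i s * u i s (logit_state x)))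
          - \<beta> * (\<omega> i * (\<Sum>s<m i. x i s * u i s x))
          - \<omega> i * (\<Sum>s<m i. (f i s x - x i s) * (ln (f i s x) - ln (x i s))))"
    unfolding lyapunov_deriv_def
    by (intro sum.cong refl) (simp only: lessThan_iff logit_direction_identity[OF x], simp add: algebra_simps)
  also have "\<dots> = \<beta> * payoff_form (logit_state x) (logit_state x) - \<beta> * payoff_form x x - dissipation x"
    by (simp only: payoff_form_def dissipation_def sum_distrib_left sum_subtractf)
  finally show ?thesis
    using payoff_form_self[OF x] payoff_form_self[OF logit_state_in_simplex] lyapunov_deriv_scale
    by simp
qed

section \<open>Existence and uniqueness of the QRE\<close>

text \<open>The competitive structure enters here: the terms in \<open>ln (f i s y) - ln (f i s x)\<close>
  linear in \<open>u\<close> add up to \<open>\<beta> * payoff_form (x - y) (x - y) = 0\<close>.\<close>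
lemma cross_entropy_QRE:
  assumes x: "x \<in> \<Delta>" and y: "is_QRE n m E A \<beta> y"
  shows "(\<Sum>i<n. \<omega> i * (\<Sum>s<m i. (x i s - y i s) * (ln (x i s) - ln (y i s))))
       = (\<Sum>i<n. \<omega> i * (\<Sum>s<m i. (x i s - y i s) * (ln (x i s) - ln (f i s x))))"
proof -
  define d where "d = (\<lambda>j t. x j t - y j t)"
  have per_population: "(\<Sum>s<m i. d i s * (ln (x i s) - ln (y i s))) =
      (\<Sum>s<m i. d i s * (ln (x i s) - ln (f i s x))) + \<beta> * (\<Sum>s<m i. d i s * u i s d)"
    if i: "i < n" for i
  proof -
    have "d i s * (ln (x i s) - ln (y i s)) = d i s * (ln (x i s) - ln (f i s x)) + \<beta> * (d i s * u i s d)
        - (ln (logit_denom i x) - ln (logit_denom i y)) * d i s" if s: "s < m i" for s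
    proof -
      have ln_y: "ln (y i s) = \<beta> * u i s y - ln (logit_denom i y)"
        using QRE_eq_logit[OF y i s] ln_logit[OF i] by metis
      have u_d: "u i s d = u i s x - u i s y" unfolding d_def by (rule util_diff)
      show ?thesis unfolding ln_logit[OF i] ln_y u_d by (simp add: algebra_simps)
    qed
    hence "(\<Sum>s<m i. d i s * (ln (x i s) - ln (y i s))) =
        (\<Sum>s<m i. d i s * (ln (x i s) - ln (f i s x)) + \<beta> * (d i s * u i s d)
          - (ln (logit_denom i x) - ln (logit_denom i y)) * d i s)"
      by (intro sum.cong) auto
    also have "\<dots> = (\<Sum>s<m i. d i s * (ln (x i s) - ln (f i s x))) + \<beta> * (\<Sum>s<m i. d i s * u i s d)
        - (ln (logit_denom i x) - ln (logit_denom i y)) * (\<Sum>s<m i. d i s)"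
      by (simp add: sum.distrib sum_subtractf sum_distrib_left)
    also have "(\<Sum>s<m i. d i s) = 0"
      using simplex_prod_sum[OF x i] simplex_prod_sum[OF QRE_in_simplex[OF y] i]
      by (simp add: d_def sum_subtractf)
    finally show ?thesis by simp
  qed
  have "(\<Sum>i<n. \<omega> i * (\<Sum>s<m i. d i s * (ln (x i s) - ln (y i s))))
      = (\<Sum>i<n. \<omega> i * (\<Sum>s<m i. d i s * (ln (x i s) - ln (f i s x)))) + \<beta> * payoff_form d d"
    by (simp add: per_population payoff_form_def distrib_left sum.distrib sum_distrib_left mult_ac)
  also have "payoff_form d d = 0"
    unfolding d_def using payoff_form_diff_self[OF x QRE_in_simplex[OF y]] .
  finally show ?thesis by (simp add: d_def)
qed

lemma wsqdist_le_residual_QRE: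
  assumes x: "x \<in> \<Delta>" and y: "is_QRE n m E A \<beta> y" and \<rho>: "0 < \<rho>"
    and x_ge: "\<And>i s. i < n \<Longrightarrow> s < m i \<Longrightarrow> \<rho> \<le> x i s"
    and f_ge: "\<And>i s. i < n \<Longrightarrow> s < m i \<Longrightarrow> \<rho> \<le> f i s x"
  shows "wsqdist x y \<le> residual x / \<rho>^2"
proof -
  have "wsqdist x y \<le> (\<Sum>i<n. \<omega> i * (\<Sum>s<m i. (x i s - y i s) * (ln (x i s) - ln (y i s))))"
    unfolding wsqdist_def
  proof (intro sum_mono mult_left_mono)
    fix i s assume i: "i \<in> {..<n}" and s: "s \<in> {..<m i}"
    have "0 < x i s" using x_ge[of i s] i s \<rho> by simp
    thus "(x i s - y i s)^2 \<le> (x i s - y i s) * (ln (x i s) - ln (y i s))"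
      using i s QRE_eq_logit[OF y, of i s] logit_pos[of i s y]
      by (intro sq_diff_le_diff_mult_ln_diff simplex_prod_le_1[OF x] simplex_prod_le_1[OF QRE_in_simplex[OF y]]) auto
  qed (simp add: weights_nonneg)
  also have "\<dots> = (\<Sum>i<n. \<omega> i * (\<Sum>s<m i. (x i s - y i s) * (ln (x i s) - ln (f i s x))))"
    by (rule cross_entropy_QRE[OF x y])
  also have "\<dots> \<le> (\<Sum>i<n. \<omega> i * (\<Sum>s<m i. ((x i s - y i s)^2 + (x i s - f i s x)^2 / \<rho>^2) / 2))"
  proof (intro sum_mono mult_left_mono)
    fix i s assume "i \<in> {..<n}" "s \<in> {..<m i}"
    hence "\<bar>ln (x i s) - ln (f i s x)\<bar> \<le> \<bar>x i s - f i s x\<bar> / \<rho>"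
      using \<rho> by (intro abs_ln_diff_le x_ge f_ge) auto
    thus "(x i s - y i s) * (ln (x i s) - ln (f i s x)) \<le> ((x i s - y i s)^2 + (x i s - f i s x)^2 / \<rho>^2) / 2"
      using mult_le_half_sum_squares by (metis power2_abs power_divide)
  qed (simp add: weights_nonneg)
  also have "\<dots> = wsqdist x y / 2 + residual x / (2 * \<rho>^2)"
    by (simp add: wsqdist_def residual_def sum.distrib distrib_left add_divide_distrib
        flip: sum_divide_distrib)
  finally show ?thesis by (simp add: field_simps)
qed

lemma wsqdist_le_lyapunov_QRE:
  assumes x: "x \<in> \<Delta>" and y: "is_QRE n m E A \<beta> y" and \<rho>: "0 < \<rho>"
    and "\<And>i s. i < n \<Longrightarrow> s < m i \<Longrightarrow> \<rho> \<le> x i s"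
    and "\<And>i s. i < n \<Longrightarrow> s < m i \<Longrightarrow> \<rho> \<le> f i s x"
  shows "wsqdist x y \<le> 4 * lyapunov x / \<rho>^2"
proof -
  have "wsqdist x y \<le> residual x / \<rho>^2" using assms by (intro wsqdist_le_residual_QRE)
  also have "\<dots> \<le> 4 * lyapunov x / \<rho>^2" using residual_le_4_lyapunov[OF x] by (intro divide_right_mono) auto
  finally show ?thesis .
qed

lemma QRE_unique:
  assumes x: "is_QRE n m E A \<beta> x" and y: "is_QRE n m E A \<beta> y"
  shows "x = y"
proof -
  have "logit_floor \<le> x i s" "logit_floor \<le> f i s x" if "i < n" "s < m i" for i s
    using logit_ge_floor[OF QRE_in_simplex[OF x] that] QRE_eq_logit[OF x that] by simp_all
  hence "wsqdist x y \<le> 0"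
    using wsqdist_le_residual_QRE[OF QRE_in_simplex[OF x] y logit_floor_pos] residual_QRE[OF x] by simp
  have eq: "x i s = y i s" if "i < n" "s < m i" for i s
  proof -
    have "\<omega> i * (x i s - y i s)^2 \<le> 0"
      using weighted_sq_le_wsqdist[OF that, of x y] \<open>wsqdist x y \<le> 0\<close> by linarith
    hence "(x i s - y i s)^2 \<le> 0" using weights_pos[OF that(1)] by (simp add: mult_le_0_iff)
    thus ?thesis by simp
  qed
  show ?thesis
  proof (intro ext)
    fix i s
    show "x i s = y i s"
      using eq simplex_prod_outside[OF QRE_in_simplex[OF x], of i s]
        simplex_prod_outside[OF QRE_in_simplex[OF y], of i s]
      by (cases "i < n \<and> s < m i") auto
  qed
qed

lemma lyapunov_descent_toward_logit:
  assumes p: "p \<in> \<Delta>" and pos: "\<And>i s. i < n \<Longrightarrow> s < m i \<Longrightarrow> 0 < p i s"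
    and not_fixed: "i < n" "s < m i" "p i s \<noteq> f i s p"
  shows "\<exists>d>0. \<forall>h. 0 < h \<longrightarrow> h < d \<longrightarrow>
           lyapunov (\<lambda>i s. p i s + h * (logit_state p i s - p i s)) < lyapunov p"
proof -
  define \<gamma> where "\<gamma> h = (\<lambda>i s. p i s + h * (logit_state p i s - p i s))" for h :: real
  have "((\<lambda>h. \<gamma> h i s) has_real_derivative 1 * (logit_state p i s - p i s)) (at 0)" for i s
    unfolding \<gamma>_def by (auto intro!: derivative_eq_intros)
  hence "((\<lambda>h. lyapunov (\<gamma> h)) has_real_derivative
      lyapunov_deriv (\<gamma> 0) (\<lambda>i s. 1 * (logit_state p i s - p i s))) (at 0)"
    using pos by (intro has_derivative_lyapunov) (auto simp: \<gamma>_def)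
  moreover have "lyapunov_deriv (\<gamma> 0) (\<lambda>i s. 1 * (logit_state p i s - p i s)) = - dissipation p"
    using lyapunov_deriv_toward_logit[OF p, of 1] by (simp add: \<gamma>_def)
  moreover have "0 < dissipation p"
    using residual_pos[OF not_fixed] residual_le_dissipation[OF p pos] by linarith
  ultimately obtain d where "d > 0" "\<And>h. 0 < h \<Longrightarrow> h < d \<Longrightarrow> lyapunov (\<gamma> (0 + h)) < lyapunov (\<gamma> 0)"
    using DERIV_neg_dec_right[of "\<lambda>h. lyapunov (\<gamma> h)" "- dissipation p" 0] by auto
  thus ?thesis by (auto simp: \<gamma>_def)
qed

text \<open>A minimiser of \<^const>\<open>lyapunov\<close> over the compact set of states bounded below by
  \<^const>\<open>logit_floor\<close> is a QRE: that set contains the segment from it towards its logit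
  response, along which \<^const>\<open>lyapunov\<close> would otherwise decrease.\<close>
lemma QRE_exists: "\<exists>x. is_QRE n m E A \<beta> x"
proof -
  define K where "K = \<Delta> \<inter> {x. \<forall>i. i < n \<longrightarrow> (\<forall>s. s < m i \<longrightarrow> logit_floor \<le> x i s)}"
  have logit_in_K: "logit_state x \<in> K" if "x \<in> \<Delta>" for x
    using logit_state_in_simplex logit_ge_floor[OF that] by (auto simp: K_def logit_state_eq)
  have const: "open {x :: nat \<Rightarrow> nat \<Rightarrow> real. c}" for c by (cases c) auto
  have "closed {x :: nat \<Rightarrow> nat \<Rightarrow> real. \<forall>i. i < n \<longrightarrow> (\<forall>s. s < m i \<longrightarrow> logit_floor \<le> x i s)}"
    by (intro closed_Collect_all closed_Collect_imp closed_Collect_le continuous_intros const)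
  hence "compact K" unfolding K_def by (intro compact_Int_closed compact_simplex_prod)
  moreover have "K \<noteq> {}" using logit_in_K[OF logit_state_in_simplex] by auto
  moreover have "continuous_on K lyapunov"
  proof -
    have "x i s \<noteq> 0" if "x \<in> K" "i < n" "s < m i" for x i s
      using that logit_floor_pos unfolding K_def by fastforce
    thus ?thesis
      unfolding lyapunov_def by (intro continuous_intros) (auto simp: logit_denom_nonzero)
  qed
  ultimately have "\<exists>p\<in>K. \<forall>y\<in>K. lyapunov p \<le> lyapunov y" by (rule continuous_attains_inf)
  then obtain p where p: "p \<in> K" "\<And>y. y \<in> K \<Longrightarrow> lyapunov p \<le> lyapunov y" by blast
  have p_simplex: "p \<in> \<Delta>" and p_ge: "\<And>i s. i < n \<Longrightarrow> s < m i \<Longrightarrow> logit_floor \<le> p i s"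
    using p(1) by (auto simp: K_def)
  have p_pos: "\<And>i s. i < n \<Longrightarrow> s < m i \<Longrightarrow> 0 < p i s"
    using p_ge logit_floor_pos by (meson less_le_trans)
  have "p i s = f i s p" if idx: "i < n" "s < m i" for i s
  proof (rule ccontr)
    assume "p i s \<noteq> f i s p"
    then obtain d where d: "d > 0" "\<And>h. 0 < h \<Longrightarrow> h < d \<Longrightarrow>
        lyapunov (\<lambda>i s. p i s + h * (logit_state p i s - p i s)) < lyapunov p"
      using lyapunov_descent_toward_logit[OF p_simplex p_pos idx] by blast
    define h where "h = min (d / 2) 1"
    have h: "0 < h" "h < d" "h \<le> 1" using d(1) by (auto simp: h_def)
    have "(\<lambda>i s. p i s + h * (logit_state p i s - p i s)) \<in> K"
      using h p_ge logit_in_K[OF p_simplex]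
      by (auto simp: K_def intro!: simplex_prod_convex_comb[OF p_simplex] convex_comb_ge)
    thus False using p(2) d(2)[OF h(1,2)] by fastforce
  qed
  thus ?thesis using p_simplex by (auto simp: is_QRE_def)
qed

section \<open>Weighted and unweighted distances\<close>

lemma tendsto_residual:
  assumes "\<And>j t. j < n \<Longrightarrow> t < m j \<Longrightarrow> ((\<lambda>k. y k j t) \<longlongrightarrow> x j t) F"
  shows "((\<lambda>k. residual (y k)) \<longlongrightarrow> residual x) F"
proof -
  have "((\<lambda>k. f i s (y k)) \<longlongrightarrow> f i s x) F" if "i < n" for i s
    using that assms by (rule tendsto_logit)
  thus ?thesis
    unfolding residual_def by (intro tendsto_sum tendsto_mult tendsto_const tendsto_power tendsto_diff assms) auto
qed

text \<open>\<^const>\<open>state_dist\<close> is not the metric of the product topology on states, hence the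
  explicit filter.\<close>
lemma residual_le_near:
  assumes "\<eta> > 0"
  shows "\<exists>d>0. \<forall>y. state_dist n m y x < d \<longrightarrow> residual y < residual x + \<eta>"
proof -
  define F where "F = (INF d\<in>{0<..}. principal {y. state_dist n m y x < d})"
  have directed: "\<exists>c\<in>{0<..}. principal {y. state_dist n m y x < c}
      \<le> inf (principal {y. state_dist n m y x < a}) (principal {y. state_dist n m y x < b})"
    if "a \<in> {0<..}" "b \<in> {0<..}" for a b :: real
    using that by (intro bexI[of _ "min a b"]) auto
  have eventually_F: "eventually P F \<longleftrightarrow> (\<exists>d>0. \<forall>y. state_dist n m y x < d \<longrightarrow> P y)" for P
    unfolding F_def by (subst eventually_INF_base[OF _ directed]) (auto simp: eventually_principal)
  have "((\<lambda>y. y j t) \<longlongrightarrow> x j t) F" if "j < n" "t < m j" for j t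
  proof (rule tendstoI)
    fix e :: real assume "0 < e"
    thus "eventually (\<lambda>y. dist (y j t) (x j t) < e) F"
      unfolding eventually_F dist_real_def using abs_diff_le_state_dist[of j n t m _ x] that
      by (meson le_less_trans)
  qed
  hence "((\<lambda>y. residual y) \<longlongrightarrow> residual x) F" by (rule tendsto_residual)
  hence "eventually (\<lambda>y. residual y < residual x + \<eta>) F"
    using assms by (intro order_tendstoD(2)) auto
  thus ?thesis unfolding eventually_F .
qed

lemma state_dist_small_if_wsqdist_small:
  assumes "\<epsilon> > 0"
  shows "\<exists>\<eta>>0. \<forall>x y. wsqdist x y < \<eta> \<longrightarrow> state_dist n m x y < \<epsilon>"
proof -
  define N where "N = (\<Sum>i<n. real (m i))"
  define \<omega>\<^sub>0 where "\<omega>\<^sub>0 = Min (insert 1 (\<omega> ` {..<n}))"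
  define e where "e = \<epsilon> / (N + 1)"
  have \<omega>\<^sub>0: "0 < \<omega>\<^sub>0" "\<And>i. i < n \<Longrightarrow> \<omega>\<^sub>0 \<le> \<omega> i" using weights_pos by (auto simp: \<omega>\<^sub>0_def)
  have N: "0 \<le> N" by (simp add: N_def sum_nonneg)
  have e: "0 < e" "e * N < \<epsilon>" using assms N by (auto simp: e_def field_simps)
  have "state_dist n m x y < \<epsilon>" if small: "wsqdist x y < e^2 * \<omega>\<^sub>0" for x y
  proof -
    have "\<bar>x i s - y i s\<bar> \<le> e" if i: "i < n" and s: "s < m i" for i s
    proof -
      have "\<omega> i * (x i s - y i s)^2 < \<omega> i * e^2"
        using weighted_sq_le_wsqdist[OF i s, of x y] small mult_right_mono[OF \<omega>\<^sub>0(2)[OF i], of "e^2"]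
        by (simp add: mult.commute)
      hence "\<bar>x i s - y i s\<bar>^2 < e^2" using weights_pos[OF i] by simp
      thus ?thesis using abs_le_square_iff[of "x i s - y i s" e] e(1) by simp
    qed
    hence "state_dist n m x y \<le> (\<Sum>i<n. \<Sum>s<m i. e)"
      unfolding state_dist_def by (intro sum_mono) auto
    also have "\<dots> = e * N" by (simp add: N_def sum_distrib_left mult.commute)
    finally show ?thesis using e(2) by simp
  qed
  thus ?thesis using e(1) \<omega>\<^sub>0(1) by (intro exI[of _ "e^2 * \<omega>\<^sub>0"]) auto
qed

lemma tendsto_coordinate_if_wsqdist_tendsto_0:
  assumes lim: "((\<lambda>t. wsqdist (z t) x) \<longlongrightarrow> 0) F" and i: "i < n" and s: "s < m i"
  shows "((\<lambda>t. z t i s) \<longlongrightarrow> x i s) F"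
proof -
  have bound: "(z t i s - x i s)^2 \<le> wsqdist (z t) x / \<omega> i" for t
    using weighted_sq_le_wsqdist[OF i s, of "z t" x] weights_pos[OF i]
    by (subst pos_le_divide_eq[OF weights_pos[OF i]]) (simp add: mult.commute[of _ "\<omega> i"])
  have "((\<lambda>t. (z t i s - x i s)^2) \<longlongrightarrow> 0) F"
    by (rule tendsto_sandwich[OF _ _ tendsto_const tendsto_divide_zero[OF lim, of "\<omega> i"]]) (simp_all add: bound)
  hence "((\<lambda>t. sqrt ((z t i s - x i s)^2)) \<longlongrightarrow> sqrt 0) F" by (rule tendsto_real_sqrt)
  hence "((\<lambda>t. \<bar>z t i s - x i s\<bar>) \<longlongrightarrow> 0) F" by simp
  thus ?thesis by (simp add: tendsto_rabs_zero_iff LIM_zero_iff)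
qed

end

section \<open>The belief dynamics\<close>

text \<open>\<^const>\<open>belief_solution\<close> says nothing about the coordinates outside the index ranges,
  so the trajectory is studied through its restriction \<open>traj\<close>.\<close>
locale belief_trajectory = competitive_game +
  fixes lam :: real and \<mu> :: "real \<Rightarrow> nat \<Rightarrow> nat \<Rightarrow> real"
  assumes lam_nonneg: "0 \<le> lam"
    and solution: "belief_solution n m E A \<beta> lam \<mu>"
    and initial: "\<mu> 0 \<in> simplex_prod n m"
begin

definition traj :: "real \<Rightarrow> nat \<Rightarrow> nat \<Rightarrow> real" where
  "traj t = restrict_state n m (\<mu> t)"

lemma traj_eq: "i < n \<Longrightarrow> s < m i \<Longrightarrow> traj t i s = \<mu> t i s"
  by (simp add: traj_def restrict_state_eq)

lemma state_dist_traj: "state_dist n m (traj t) x = state_dist n m (\<mu> t) x"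
  unfolding state_dist_def by (intro sum.cong refl) (simp add: traj_eq)

lemma traj_0: "traj 0 = \<mu> 0"
  using initial by (simp add: traj_def restrict_state_simplex_prod)

lemma has_derivative_traj:
  assumes "0 \<le> t" "i < n" "s < m i"
  shows "((\<lambda>\<tau>. traj \<tau> i s) has_real_derivative (f i s (traj t) - traj t i s) / (lam + t + 1))
           (at t within {0..})"
proof -
  have "(\<lambda>\<tau>. traj \<tau> i s) = (\<lambda>\<tau>. \<mu> \<tau> i s)" using assms by (simp add: traj_eq)
  moreover have "f i s (traj t) = f i s (\<mu> t)" by (simp add: traj_def logit_restrict_state)
  ultimately show ?thesis using solution assms by (simp add: belief_solution_def traj_eq)
qed

text \<open>Along the dynamics \<open>d/dt ((lam + t + 1) * traj t i s) = f i s (traj t)\<close>.\<close>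
lemma traj_nonneg:
  assumes t: "0 \<le> t" and i: "i < n" and s: "s < m i"
  shows "0 \<le> traj t i s"
proof -
  define g where "g \<tau> = traj \<tau> i s * (lam + \<tau> + 1)" for \<tau>
  have "g 0 \<le> g t"
  proof (rule DERIV_nonneg_imp_le_within_nonneg[OF order.refl t, where g' = "\<lambda>\<tau>. f i s (traj \<tau>)"])
    fix \<tau> assume "0 \<le> \<tau>" "\<tau> \<le> t"
    thus "(g has_real_derivative f i s (traj \<tau>)) (at \<tau> within {0..})"
      unfolding g_def using lam_nonneg
      by (rule_tac derivative_eq_intros has_derivative_traj[OF _ i s] refl | simp)+
  qed (use logit_pos[OF i] in \<open>simp add: less_imp_le\<close>)
  moreover have "0 \<le> g 0"
    using simplex_prod_nonneg[OF initial i s] lam_nonneg by (simp add: g_def traj_0)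
  ultimately have "0 \<le> g t" by linarith
  thus ?thesis using t lam_nonneg by (simp add: g_def zero_le_mult_iff)
qed

lemma traj_sum:
  assumes t: "0 \<le> t" and i: "i < n"
  shows "(\<Sum>s<m i. traj t i s) = 1"
proof -
  define g where "g \<tau> = ((\<Sum>s<m i. traj \<tau> i s) - 1) * (lam + \<tau> + 1)" for \<tau>
  have "g 0 = g t"
  proof (rule DERIV_zero_imp_eq_within_nonneg[OF order.refl t])
    fix \<tau> assume \<tau>: "0 \<le> \<tau>" "\<tau> \<le> t"
    have "(g has_real_derivative (\<Sum>s<m i. (f i s (traj \<tau>) - traj \<tau> i s) / (lam + \<tau> + 1)) * (lam + \<tau> + 1)
        + ((\<Sum>s<m i. traj \<tau> i s) - 1)) (at \<tau> within {0..})"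
      unfolding g_def
      by (rule derivative_eq_intros DERIV_sum has_derivative_traj[OF \<tau>(1) i] refl | simp)+
    moreover have "(\<Sum>s<m i. (f i s (traj \<tau>) - traj \<tau> i s) / (lam + \<tau> + 1)) * (lam + \<tau> + 1)
        + ((\<Sum>s<m i. traj \<tau> i s) - 1) = 0"
      using \<tau> lam_nonneg logit_sum[OF i] by (simp add: sum_subtractf flip: sum_divide_distrib)
    ultimately show "(g has_real_derivative 0) (at \<tau> within {0..})" by simp
  qed
  moreover have "g 0 = 0" using simplex_prod_sum[OF initial i] by (simp add: g_def traj_0)
  ultimately show ?thesis using t lam_nonneg by (simp add: g_def)
qed

lemma traj_in_simplex: "0 \<le> t \<Longrightarrow> traj t \<in> \<Delta>"
  by (rule simplex_prodI) (simp_all add: traj_nonneg traj_sum, auto simp: traj_def restrict_state_def)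

lemma traj_lower_bound:
  assumes t: "0 \<le> t" and i: "i < n" and s: "s < m i"
  shows "\<mu> 0 i s * (lam + 1) + logit_floor * t \<le> traj t i s * (lam + t + 1)"
proof -
  define g where "g \<tau> = traj \<tau> i s * (lam + \<tau> + 1) - logit_floor * \<tau>" for \<tau>
  have "g 0 \<le> g t"
  proof (rule DERIV_nonneg_imp_le_within_nonneg[OF order.refl t, where g' = "\<lambda>\<tau>. f i s (traj \<tau>) - logit_floor"])
    fix \<tau> assume "0 \<le> \<tau>" "\<tau> \<le> t"
    thus "(g has_real_derivative f i s (traj \<tau>) - logit_floor) (at \<tau> within {0..})"
      unfolding g_def using lam_nonneg
      by (rule_tac derivative_eq_intros has_derivative_traj[OF _ i s] refl | simp)+
  next
    fix \<tau> :: real assume "0 < \<tau>"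
    thus "0 \<le> f i s (traj \<tau>) - logit_floor" using logit_ge_floor[OF traj_in_simplex i s] by simp
  qed
  thus ?thesis by (simp add: g_def traj_0 traj_eq[OF i s])
qed

lemma traj_ge_of_initial_ge:
  assumes c: "c \<le> logit_floor" and initial_ge: "\<And>i s. i < n \<Longrightarrow> s < m i \<Longrightarrow> c \<le> \<mu> 0 i s"
    and t: "0 \<le> t" and i: "i < n" and s: "s < m i"
  shows "c \<le> traj t i s"
proof -
  have "c * (lam + 1) \<le> \<mu> 0 i s * (lam + 1)"
    using initial_ge[OF i s] lam_nonneg by (intro mult_right_mono) auto
  moreover have "c * t \<le> logit_floor * t" using c t by (intro mult_right_mono) auto
  moreover have "c * (lam + t + 1) = c * (lam + 1) + c * t" by (simp add: algebra_simps)
  ultimately have "c * (lam + t + 1) \<le> \<mu> 0 i s * (lam + 1) + logit_floor * t" by linarith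
  also have "\<dots> \<le> traj t i s * (lam + t + 1)" by (rule traj_lower_bound[OF t i s])
  finally show ?thesis using t lam_nonneg by (simp add: mult_le_cancel_right)
qed

lemma traj_ge_after_1:
  assumes t: "1 \<le> t" and i: "i < n" and s: "s < m i"
  shows "logit_floor / (lam + 2) \<le> traj t i s"
proof -
  have "0 \<le> (t - 1) * (lam + 1)" using t lam_nonneg by simp
  hence "logit_floor * (lam + t + 1) \<le> logit_floor * (t * (lam + 2))"
    using logit_floor_pos by (intro mult_left_mono) (auto simp: algebra_simps)
  also have "\<dots> = (logit_floor * t) * (lam + 2)" by simp
  also have "\<dots> \<le> (traj t i s * (lam + t + 1)) * (lam + 2)"
  proof (intro mult_right_mono)
    have "0 \<le> \<mu> 0 i s * (lam + 1)" using simplex_prod_nonneg[OF initial i s] lam_nonneg by simp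
    thus "logit_floor * t \<le> traj t i s * (lam + t + 1)" using traj_lower_bound[OF _ i s, of t] t by linarith
  qed (use lam_nonneg in simp)
  finally have "logit_floor * (lam + t + 1) \<le> (traj t i s * (lam + 2)) * (lam + t + 1)"
    by (simp add: algebra_simps)
  hence "logit_floor \<le> traj t i s * (lam + 2)" using t lam_nonneg by (simp add: mult_le_cancel_right)
  thus ?thesis using lam_nonneg by (simp add: pos_divide_le_eq)
qed

lemma has_derivative_lyapunov_traj:
  assumes t: "0 \<le> t" and pos: "\<And>i s. i < n \<Longrightarrow> s < m i \<Longrightarrow> 0 < traj t i s"
  shows "((\<lambda>\<tau>. lyapunov (traj \<tau>)) has_real_derivative - dissipation (traj t) / (lam + t + 1))
           (at t within {0..})"
proof -
  have "((\<lambda>\<tau>. lyapunov (traj \<tau>)) has_real_derivative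
      lyapunov_deriv (traj t) (\<lambda>i s. 1 / (lam + t + 1) * (logit_state (traj t) i s - traj t i s)))
      (at t within {0..})"
    using has_derivative_traj[OF t] pos by (intro has_derivative_lyapunov) (simp_all add: logit_state_eq)
  thus ?thesis unfolding lyapunov_deriv_toward_logit[OF traj_in_simplex[OF t]] by simp
qed

lemma traj_pos_after_1: "1 \<le> t \<Longrightarrow> i < n \<Longrightarrow> s < m i \<Longrightarrow> 0 < traj t i s"
  using traj_ge_after_1[of t i s] logit_floor_pos lam_nonneg
  by (meson add_nonneg_pos divide_pos_pos less_le_trans zero_less_numeral)

lemma floor_mult_lyapunov_traj_le_dissipation:
  assumes "1 \<le> t"
  shows "logit_floor * lyapunov (traj t) \<le> dissipation (traj t)"
proof -
  have in_simplex: "traj t \<in> \<Delta>" using assms by (intro traj_in_simplex) auto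
  have "logit_floor * lyapunov (traj t) \<le> residual (traj t)"
    using lyapunov_le_residual_div[OF in_simplex logit_floor_pos logit_ge_floor[OF in_simplex]]
      logit_floor_pos by (simp add: field_simps)
  also have "\<dots> \<le> dissipation (traj t)"
    using assms by (intro residual_le_dissipation in_simplex traj_pos_after_1) auto
  finally show ?thesis .
qed

lemma scaled_lyapunov_traj_decreasing:
  assumes t: "1 \<le> t"
  shows "lyapunov (traj t) * (lam + t + 1) powr logit_floor \<le> lyapunov (traj 1) * (lam + 2) powr logit_floor"
proof -
  define \<delta> where "\<delta> = logit_floor"
  define \<psi> where "\<psi> \<tau> = lyapunov (traj \<tau>) * (lam + \<tau> + 1) powr \<delta>" for \<tau>
  define \<psi>' where "\<psi>' \<tau> = - dissipation (traj \<tau>) / (lam + \<tau> + 1) * (lam + \<tau> + 1) powr \<delta>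
      + \<delta> * (lam + \<tau> + 1) powr (\<delta> - 1) * lyapunov (traj \<tau>)" for \<tau>
  have "- \<psi> 1 \<le> - \<psi> t"
  proof (rule DERIV_nonneg_imp_le_within_nonneg[OF _ t, where g' = "\<lambda>\<tau>. - \<psi>' \<tau>"])
    fix \<tau> assume \<tau>: "1 \<le> \<tau>" "\<tau> \<le> t"
    have "((\<lambda>\<tau>. lyapunov (traj \<tau>)) has_real_derivative - dissipation (traj \<tau>) / (lam + \<tau> + 1))
        (at \<tau> within {0..})"
      using \<tau> by (intro has_derivative_lyapunov_traj traj_pos_after_1) auto
    moreover have "((\<lambda>\<tau>. lam + \<tau> + 1) has_real_derivative 1) (at \<tau>)"
      by (auto intro!: derivative_eq_intros)
    hence "((\<lambda>\<tau>. (lam + \<tau> + 1) powr \<delta>) has_real_derivative \<delta> * (lam + \<tau> + 1) powr (\<delta> - 1)) (at \<tau>)"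
      using DERIV_fun_powr[of "\<lambda>\<tau>. lam + \<tau> + 1" 1 \<tau> \<delta>] \<tau> lam_nonneg by simp
    hence "((\<lambda>\<tau>. (lam + \<tau> + 1) powr \<delta>) has_real_derivative \<delta> * (lam + \<tau> + 1) powr (\<delta> - 1))
        (at \<tau> within {0..})"
      by (rule has_field_derivative_at_within)
    ultimately show "((\<lambda>\<tau>. - \<psi> \<tau>) has_real_derivative - \<psi>' \<tau>) (at \<tau> within {0..})"
      unfolding \<psi>_def \<psi>'_def by (intro DERIV_minus DERIV_mult)
  next
    fix \<tau> assume \<tau>: "1 < \<tau>" "\<tau> < t"
    define c where "c = lam + \<tau> + 1"
    have c: "0 < c" using \<tau> lam_nonneg by (simp add: c_def)
    have "\<delta> * lyapunov (traj \<tau>) - dissipation (traj \<tau>) \<le> 0"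
      using floor_mult_lyapunov_traj_le_dissipation[of \<tau>] \<tau> by (simp add: \<delta>_def)
    hence "c powr \<delta> / c * (\<delta> * lyapunov (traj \<tau>) - dissipation (traj \<tau>)) \<le> 0"
      using c by (intro mult_nonneg_nonpos) auto
    moreover have "c powr (\<delta> - 1) = c powr \<delta> / c" using c by (simp add: powr_diff)
    hence "\<psi>' \<tau> = c powr \<delta> / c * (\<delta> * lyapunov (traj \<tau>) - dissipation (traj \<tau>))"
      unfolding \<psi>'_def c_def[symmetric] by (simp add: algebra_simps)
    ultimately show "0 \<le> - \<psi>' \<tau>" by linarith
  qed simp
  thus ?thesis by (simp add: \<psi>_def \<delta>_def add.commute)
qed

lemma lyapunov_traj_tendsto_0: "((\<lambda>t. lyapunov (traj t)) \<longlongrightarrow> 0) at_top"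
proof (rule tendsto_sandwich[OF _ _ tendsto_const])
  define C where "C = lyapunov (traj 1) * (lam + 2) powr logit_floor"
  have "filterlim (\<lambda>t. lam + 1 + t) at_top at_top"
    by (rule filterlim_tendsto_add_at_top[OF tendsto_const filterlim_ident])
  hence "((\<lambda>t. (lam + 1 + t) powr - logit_floor) \<longlongrightarrow> 0) at_top"
    using logit_floor_pos by (intro tendsto_neg_powr) auto
  thus "((\<lambda>t. C * (lam + t + 1) powr - logit_floor) \<longlongrightarrow> 0) at_top"
    using tendsto_mult_right_zero[of _ at_top C] by (simp add: add_ac)
  have "lyapunov (traj t) \<le> C * (lam + t + 1) powr - logit_floor" if "1 \<le> t" for t
  proof -
    have "0 < (lam + t + 1) powr logit_floor" using that lam_nonneg by simp
    hence "lyapunov (traj t) \<le> C / (lam + t + 1) powr logit_floor"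
      using scaled_lyapunov_traj_decreasing[OF that] by (simp add: pos_le_divide_eq C_def)
    thus ?thesis by (simp add: powr_minus divide_inverse)
  qed
  thus "eventually (\<lambda>t. lyapunov (traj t) \<le> C * (lam + t + 1) powr - logit_floor) at_top"
    unfolding eventually_at_top_linorder by blast
  show "eventually (\<lambda>t. 0 \<le> lyapunov (traj t)) at_top"
    unfolding eventually_at_top_linorder by (intro exI[of _ 0] allI impI lyapunov_nonneg traj_in_simplex)
qed

lemma traj_tendsto_QRE:
  assumes x: "is_QRE n m E A \<beta> x" and i: "i < n" and s: "s < m i"
  shows "((\<lambda>t. \<mu> t i s) \<longlongrightarrow> x i s) at_top"
proof -
  define \<rho> where "\<rho> = logit_floor / (lam + 2)"
  have \<rho>: "0 < \<rho>" "\<rho> \<le> logit_floor"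
    using logit_floor_pos lam_nonneg by (auto simp: \<rho>_def field_simps)
  have "wsqdist (traj t) x \<le> 4 * lyapunov (traj t) / \<rho>^2" if "1 \<le> t" for t
  proof (rule wsqdist_le_lyapunov_QRE[OF _ x \<rho>(1)])
    show in_simplex: "traj t \<in> \<Delta>" using that by (intro traj_in_simplex) simp
    show "\<rho> \<le> traj t i s" if "i < n" "s < m i" for i s
      using traj_ge_after_1[OF \<open>1 \<le> t\<close> that] by (simp add: \<rho>_def)
    show "\<rho> \<le> f i s (traj t)" if "i < n" "s < m i" for i s
      using logit_ge_floor[OF in_simplex that] \<rho>(2) by linarith
  qed
  hence bound: "eventually (\<lambda>t. wsqdist (traj t) x \<le> 4 * lyapunov (traj t) / \<rho>^2) at_top"
    unfolding eventually_at_top_linorder by blast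
  have lim: "((\<lambda>t. 4 * lyapunov (traj t) / \<rho>^2) \<longlongrightarrow> 0) at_top"
    using tendsto_divide_zero[OF tendsto_mult_right_zero[OF lyapunov_traj_tendsto_0], of 4 "\<rho>^2"] by simp
  have "((\<lambda>t. wsqdist (traj t) x) \<longlongrightarrow> 0) at_top"
    by (rule tendsto_sandwich[OF _ bound tendsto_const lim]) (simp add: wsqdist_nonneg)
  hence "((\<lambda>t. traj t i s) \<longlongrightarrow> x i s) at_top" using i s by (rule tendsto_coordinate_if_wsqdist_tendsto_0)
  thus ?thesis using i s by (simp add: traj_eq)
qed

lemma lyapunov_traj_le_initial:
  assumes t: "0 \<le> t" and pos: "\<And>\<tau> i s. 0 \<le> \<tau> \<Longrightarrow> i < n \<Longrightarrow> s < m i \<Longrightarrow> 0 < traj \<tau> i s"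
  shows "lyapunov (traj t) \<le> lyapunov (\<mu> 0)"
proof -
  have "- lyapunov (traj 0) \<le> - lyapunov (traj t)"
  proof (rule DERIV_nonneg_imp_le_within_nonneg[OF order.refl t])
    fix \<tau> :: real assume "0 \<le> \<tau>" "\<tau> \<le> t"
    thus "((\<lambda>\<tau>. - lyapunov (traj \<tau>)) has_real_derivative - (- dissipation (traj \<tau>) / (lam + \<tau> + 1)))
        (at \<tau> within {0..})"
      using pos by (intro DERIV_minus has_derivative_lyapunov_traj) auto
  next
    fix \<tau> :: real assume "0 < \<tau>"
    hence "residual (traj \<tau>) \<le> dissipation (traj \<tau>)"
      using pos by (intro residual_le_dissipation traj_in_simplex) auto
    hence "0 \<le> dissipation (traj \<tau>)" using residual_nonneg[of "traj \<tau>"] by linarith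
    thus "0 \<le> - (- dissipation (traj \<tau>) / (lam + \<tau> + 1))" using \<open>0 < \<tau>\<close> lam_nonneg by simp
  qed
  thus ?thesis by (simp add: traj_0)
qed

lemma traj_wsqdist_QRE_le:
  assumes x: "is_QRE n m E A \<beta> x" and t: "0 \<le> t"
    and initial_ge: "\<And>i s. i < n \<Longrightarrow> s < m i \<Longrightarrow> logit_floor / 2 \<le> \<mu> 0 i s"
  shows "wsqdist (traj t) x \<le> 4 * residual (\<mu> 0) / (logit_floor * (logit_floor / 2)^2)"
proof -
  have traj_ge: "logit_floor / 2 \<le> traj \<tau> i s" if "0 \<le> \<tau>" "i < n" "s < m i" for \<tau> i s
    using initial_ge logit_floor_pos by (intro traj_ge_of_initial_ge that) auto
  have pos: "0 < traj \<tau> i s" if "0 \<le> \<tau>" "i < n" "s < m i" for \<tau> i s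
    using traj_ge[OF that] logit_floor_pos by linarith
  have "wsqdist (traj t) x \<le> 4 * lyapunov (traj t) / (logit_floor / 2)^2"
  proof (rule wsqdist_le_lyapunov_QRE[OF traj_in_simplex[OF t] x])
    show "logit_floor / 2 \<le> f i s (traj t)" if "i < n" "s < m i" for i s
      using logit_ge_floor[OF traj_in_simplex[OF t] that] logit_floor_pos by simp
  qed (use logit_floor_pos traj_ge t in auto)
  also have "\<dots> \<le> 4 * lyapunov (\<mu> 0) / (logit_floor / 2)^2"
    using lyapunov_traj_le_initial[OF t pos] by (intro divide_right_mono) auto
  also have "\<dots> \<le> 4 * (residual (\<mu> 0) / logit_floor) / (logit_floor / 2)^2"
    using lyapunov_le_residual_div[OF initial logit_floor_pos logit_ge_floor[OF initial]]
    by (intro divide_right_mono) auto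
  finally show ?thesis by simp
qed

end

context competitive_game
begin

lemma QRE_attracts_beliefs:
  assumes "0 \<le> lam" and x: "is_QRE n m E A \<beta> x"
    and "belief_solution n m E A \<beta> lam \<mu>" "\<mu> 0 \<in> \<Delta>" "i < n" "s < m i"
  shows "((\<lambda>t. \<mu> t i s) \<longlongrightarrow> x i s) at_top"
proof -
  interpret belief_trajectory n m E A \<beta> \<omega> lam \<mu> by unfold_locales (use assms in auto)
  show ?thesis using assms by (intro traj_tendsto_QRE)
qed

lemma QRE_stable:
  assumes lam: "0 \<le> lam" and x: "is_QRE n m E A \<beta> x" and \<epsilon>: "\<epsilon> > 0"
  shows "\<exists>\<delta>>0. \<forall>\<mu>. belief_solution n m E A \<beta> lam \<mu> \<and> \<mu> 0 \<in> \<Delta> \<and> state_dist n m (\<mu> 0) x < \<delta>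
           \<longrightarrow> (\<forall>t\<ge>0. state_dist n m (\<mu> t) x < \<epsilon>)"
proof -
  define c where "c = logit_floor * (logit_floor / 2)^2 / 4"
  have c: "0 < c" using logit_floor_pos by (simp add: c_def)
  obtain \<eta> where \<eta>: "\<eta> > 0" "\<And>y z. wsqdist y z < \<eta> \<Longrightarrow> state_dist n m y z < \<epsilon>"
    using state_dist_small_if_wsqdist_small[OF \<epsilon>] by blast
  obtain d where d: "d > 0" "\<And>y. state_dist n m y x < d \<Longrightarrow> residual y < \<eta> * c"
    using residual_le_near[of "\<eta> * c" x] \<eta>(1) c residual_QRE[OF x] by auto
  have "state_dist n m (\<mu> t) x < \<epsilon>"
    if sol: "belief_solution n m E A \<beta> lam \<mu>" "\<mu> 0 \<in> \<Delta>" and close: "state_dist n m (\<mu> 0) x < min d (logit_floor / 2)"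
      and t: "0 \<le> t" for \<mu> t
  proof -
    interpret belief_trajectory n m E A \<beta> \<omega> lam \<mu> by unfold_locales (use lam sol in auto)
    have "logit_floor / 2 \<le> \<mu> 0 i s" if "i < n" "s < m i" for i s
      using abs_diff_le_state_dist[of i n s m "\<mu> 0" x] that close
        logit_ge_floor[OF QRE_in_simplex[OF x] that] QRE_eq_logit[OF x that]
      by linarith
    hence "wsqdist (traj t) x \<le> residual (\<mu> 0) / c"
      using traj_wsqdist_QRE_le[OF x t] by (simp add: c_def field_simps)
    also have "\<dots> < \<eta>" using d(2)[of "\<mu> 0"] close c by (simp add: divide_less_eq)
    finally show ?thesis using \<eta>(2) state_dist_traj by metis
  qed
  thus ?thesis using d(1) logit_floor_pos by (intro exI[of _ "min d (logit_floor / 2)"]) auto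
qed

end

theorem theorem3:
  fixes n :: nat and m :: "nat \<Rightarrow> nat" and E :: "nat \<Rightarrow> nat \<Rightarrow> bool"
    and A :: "nat \<Rightarrow> nat \<Rightarrow> nat \<Rightarrow> nat \<Rightarrow> real" and \<beta> lam :: real
  assumes "network_graph E"
    and "\<forall>i<n. 1 \<le> m i"
    and "competitive n m E A"
    and "0 < \<beta>" and "0 \<le> lam"
  shows "\<exists>x. is_QRE n m E A \<beta> x
           \<and> (\<forall>y. is_QRE n m E A \<beta> y \<longrightarrow> y = x)
           \<and> (\<forall>\<mu>. belief_solution n m E A \<beta> lam \<mu> \<and> \<mu> 0 \<in> simplex_prod n m \<longrightarrow>
                (\<forall>i<n. \<forall>s<m i. ((\<lambda>t. \<mu> t i s) \<longlongrightarrow> x i s) at_top))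
           \<and> (\<forall>\<epsilon>>0. \<exists>\<delta>>0. \<forall>\<mu>. belief_solution n m E A \<beta> lam \<mu> \<and> \<mu> 0 \<in> simplex_prod n m
                \<and> state_dist n m (\<mu> 0) x < \<delta> \<longrightarrow> (\<forall>t\<ge>0. state_dist n m (\<mu> t) x < \<epsilon>))"
proof -
  obtain \<omega> where "\<forall>i<n. 0 < \<omega> i" "\<forall>x\<in>simplex_prod n m. (\<Sum>i<n. \<omega> i * payoff n m E A i x) = 0"
    using assms(3) unfolding competitive_def by blast
  then interpret competitive_game n m E A \<beta> \<omega>
    using assms(2) by unfold_locales auto
  obtain x where x: "is_QRE n m E A \<beta> x" using QRE_exists by blast
  show ?thesis
  proof (intro exI[of _ x] conjI allI impI)
    show "is_QRE n m E A \<beta> x" by (rule x)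
    show "y = x" if "is_QRE n m E A \<beta> y" for y using QRE_unique[OF that x] .
    show "((\<lambda>t. \<mu> t i s) \<longlongrightarrow> x i s) at_top"
      if "belief_solution n m E A \<beta> lam \<mu> \<and> \<mu> 0 \<in> \<Delta>" "i < n" "s < m i" for \<mu> i s
      using QRE_attracts_beliefs[OF assms(5) x] that by blast
    show "\<exists>\<delta>>0. \<forall>\<mu>. belief_solution n m E A \<beta> lam \<mu> \<and> \<mu> 0 \<in> \<Delta> \<and> state_dist n m (\<mu> 0) x < \<delta>
        \<longrightarrow> (\<forall>t\<ge>0. state_dist n m (\<mu> t) x < \<epsilon>)" if "\<epsilon> > 0" for \<epsilon>
      using QRE_stable[OF assms(5) x that] .
  qed
qed

end
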